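(* Let $n\ge1$, $f\in OSym_{n-1}$, $m\ge0$ and $1\le k\le n$. Then in the $ONH_n$-supermodule $OPol_n$, $$\tau_{k-1}\cdots\tau_1x_1^{m+k-1}\cdot\sigma_1(f)=\sum_{i=0}^{k-1}\sigma_i\big(h^{(k-i)}_{m+i}\big)\,\tau_i\cdots\tau_1\cdot\sigma_1(f),$$ where for $i=0$ the product $\tau_i\cdots\tau_1$ is interpreted as $1$.
   Context: $\Bbbk$ is a field of characteristic $\neq2$. $OPol_N$: graded superalgebra generated by odd degree-2 $x_1,\dots,x_N$ with $x_jx_i=-x_ix_j$ ($i\neq j$); $OPol_M\subseteq OPol_N$ for $M\le N$. $OSym_N\subseteq OPol_N$ is the subalgebra generated by $e^{(N)}_r:=\sum_{1\le i_1<\cdots<i_r\le N}x_{i_1}\cdots x_{i_r}$. $h^{(N)}_r:=\sum_{N\ge i_r\ge\cdots\ge i_1\ge1}x_{i_r}\cdots x_{i_1}$. $\sigma_i:OPol_{N}\to OPol_{N+i}$ is $x_j\mapsto x_{j+i}$. The odd nil-Hecke algebra $ONH_n$ is the graded superalgebra generated by odd elements $x_1,\dots,x_n$ (degree 2) and $\tau_1,\dots,\tau_{n-1}$ (degree $-2$) subject to: $x_ix_j=-x_jx_i$ ($i\ne j$); $\tau_i\tau_j=-\tau_j\tau_i$ ($|i-j|>1$); $x_i\tau_j=-\tau_jx_i$ ($i\ne j,j+1$); $\tau_j^2=0$; $\tau_j\tau_{j+1}\tau_j=-\tau_{j+1}\tau_j\tau_{j+1}$; $x_i\tau_i-\tau_ix_{i+1}=1=\tau_ix_i-x_{i+1}\tau_i$.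 It acts on $OPol_n$ with $x_i$ acting by left multiplication and $\tau_j$ acting by the odd Demazure operator $\partial_j$: the unique odd linear map with $\partial_j(x_i)=\delta_{i,j}-\delta_{i,j+1}$ and $\partial_j(fg)=\partial_j(f)g+({}^{s_j}f)\partial_j(g)$, where ${}^{s_j}$ is the superalgebra automorphism with $x_j\mapsto x_{j+1}$, $x_{j+1}\mapsto x_j$, $x_i\mapsto -x_i$ otherwise. *)

theory Defs
  imports Main
begin

text \<open>A monomial x_1^(a 1) x_2^(a 2) ... x_N^(a N) (ordered, increasing indices)
  is encoded by its exponent function a (with a 0 = 0, finite support).
  An odd polynomial is a finitely supported coefficient function on monomials.\<close>

type_synonym mon = "nat \<Rightarrow> nat"
type_synonym 'k opol = "mon \<Rightarrow> 'k"

definition opol_N :: "nat \<Rightarrow> 'k::zero opol set" where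
  "opol_N N = {p. finite {a. p a \<noteq> 0} \<and>
      (\<forall>a. p a \<noteq> 0 \<longrightarrow> (\<forall>i. a i \<noteq> 0 \<longrightarrow> 1 \<le> i \<and> i \<le> N))}"

definition ozero :: "'k::zero opol" where "ozero = (\<lambda>a. 0)"
definition oadd :: "'k::plus opol \<Rightarrow> 'k opol \<Rightarrow> 'k opol" where
  "oadd p q = (\<lambda>a. p a + q a)"
definition oneg :: "'k::uminus opol \<Rightarrow> 'k opol" where
  "oneg p = (\<lambda>a. - p a)"
definition osmul :: "'k::times \<Rightarrow> 'k opol \<Rightarrow> 'k opol" where
  "osmul c p = (\<lambda>a. c * p a)"
definition osum :: "('i \<Rightarrow> 'k::comm_monoid_add opol) \<Rightarrow> 'i set \<Rightarrow> 'k opol" where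
  "osum F I = (\<lambda>a. \<Sum>i\<in>I. F i a)"

text \<open>Sign of reordering: x^a x^b = (-1)^(sum_{i>j} a_i b_j) x^(a+b), since
  x_j x_i = - x_i x_j for i \<noteq> j.\<close>
definition msign :: "mon \<Rightarrow> mon \<Rightarrow> 'k::comm_ring_1" where
  "msign a b = (-1) ^ (\<Sum>i\<in>{i. a i \<noteq> 0}. \<Sum>j<i. a i * b j)"

definition omult :: "'k::comm_ring_1 opol \<Rightarrow> 'k opol \<Rightarrow> 'k opol" where
  "omult p q = (\<lambda>c. \<Sum>a\<in>{a. \<forall>i. a i \<le> c i}.
       msign a (\<lambda>i. c i - a i) * p a * q (\<lambda>i. c i - a i))"

definition mon_poly :: "mon \<Rightarrow> 'k::{zero,one} opol" where
  "mon_poly a = (\<lambda>b. if b = a then 1 else 0)"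

definition oone :: "'k::{zero,one} opol" where "oone = mon_poly (\<lambda>_. 0)"

definition ovar :: "nat \<Rightarrow> 'k::{zero,one} opol" where
  "ovar i = mon_poly (\<lambda>j. if j = i then 1 else 0)"

definition opow :: "'k::comm_ring_1 opol \<Rightarrow> nat \<Rightarrow> 'k opol" where
  "opow p m = (omult p ^^ m) oone"

definition word_eval :: "nat list \<Rightarrow> 'k::comm_ring_1 opol" where
  "word_eval w = foldr (\<lambda>i acc. omult (ovar i) acc) w oone"

definition mono_word :: "mon \<Rightarrow> nat list" where
  "mono_word a = concat (map (\<lambda>i. replicate (a i) i) (sorted_list_of_set {i. a i \<noteq> 0}))"

text \<open>The algebra homomorphism OPol \<rightarrow> OPol sending x_i to g i.\<close>
definition osubst :: "(nat \<Rightarrow> 'k::comm_ring_1 opol) \<Rightarrow> 'k opol \<Rightarrow> 'k opol" where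
  "osubst g p = osum (\<lambda>a. osmul (p a) (foldr (\<lambda>i acc. omult (g i) acc) (mono_word a) oone))
                      {a. p a \<noteq> 0}"

definition osigma :: "nat \<Rightarrow> 'k::comm_ring_1 opol \<Rightarrow> 'k opol" where
  "osigma i = osubst (\<lambda>j. ovar (j + i))"

definition simg :: "nat \<Rightarrow> nat \<Rightarrow> 'k::comm_ring_1 opol" where
  "simg j i = (if i = j then ovar (j + 1) else if i = j + 1 then ovar j else oneg (ovar i))"

definition osj :: "nat \<Rightarrow> 'k::comm_ring_1 opol \<Rightarrow> 'k opol" where
  "osj j = osubst (simg j)"

text \<open>Odd Demazure operator \<partial>_j, determined by \<partial>_j(x_i) = \<delta>_{i,j} - \<delta>_{i,j+1},
  linearity and \<partial>_j(fg) = \<partial>_j(f) g + (s_j f) \<partial>_j(g); on a word of generators:\<close>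
fun dem_word :: "nat \<Rightarrow> nat list \<Rightarrow> 'k::comm_ring_1 opol" where
  "dem_word j [] = ozero"
| "dem_word j (i # w) =
     oadd (osmul (if i = j then 1 else if i = j + 1 then -1 else 0) (word_eval w))
          (omult (simg j i) (dem_word j w))"

definition odem :: "nat \<Rightarrow> 'k::comm_ring_1 opol \<Rightarrow> 'k opol" where
  "odem j p = osum (\<lambda>a. osmul (p a) (dem_word j (mono_word a))) {a. p a \<noteq> 0}"

text \<open>action of \<tau>_i ... \<tau>_1 (\<tau>_1 acts first); for i = 0 it is the identity\<close>
fun odem_seq :: "nat \<Rightarrow> 'k::comm_ring_1 opol \<Rightarrow> 'k opol" where
  "odem_seq 0 p = p"
| "odem_seq (Suc i) p = odem (Suc i) (odem_seq i p)"

definition esym :: "nat \<Rightarrow> nat \<Rightarrow> 'k::comm_ring_1 opol" where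
  "esym N r = osum (\<lambda>S. word_eval (sorted_list_of_set S)) {S. S \<subseteq> {1..N} \<and> card S = r}"

definition hsym :: "nat \<Rightarrow> nat \<Rightarrow> 'k::comm_ring_1 opol" where
  "hsym N r = osum (\<lambda>l. word_eval (rev l))
                   {l. length l = r \<and> sorted l \<and> set l \<subseteq> {1..N}}"

inductive_set osym :: "nat \<Rightarrow> 'k::comm_ring_1 opol set" for N where
  gen: "esym N r \<in> osym N"
| one: "oone \<in> osym N"
| add: "p \<in> osym N \<Longrightarrow> q \<in> osym N \<Longrightarrow> oadd p q \<in> osym N"
| smul: "p \<in> osym N \<Longrightarrow> osmul c p \<in> osym N"
| mult: "p \<in> osym N \<Longrightarrow> q \<in> osym N \<Longrightarrow> omult p q \<in> osym N"

end

theory Submission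
  imports Defs "HOL-Library.Multiset"
begin

text \<open>The generators \<open>\<tau>_j\<close> act by the odd Demazure operators \<open>\<partial>_j\<close>.  These satisfy the
  twisted Leibniz rule \<open>\<partial>_j(fg) = \<partial>_j(f) g + s_j(f) \<partial>_j(g)\<close>, anticommute when their
  indices differ by at least two, kill \<open>OSym_N\<close> for \<open>1 \<le> j < N\<close>, and lower complete
  symmetric polynomials: \<open>\<partial>_N h^(N)_(r+1) = h^(N+1)_r\<close>.  The identity then follows by
  induction on \<open>k\<close>: apply \<open>\<partial>_k\<close> to the identity for \<open>k - 1\<close> and \<open>m + 1\<close> and expand each
  summand by the Leibniz rule.

  Substitutions and Demazure operators are given on ordered monomials.  That they act on
  arbitrary words of generators as the sign rules predict, which is what the Leibniz rule
  needs, holds because exchanging two adjacent distinct letters of a word only changes a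
  sign.\<close>

section \<open>The superalgebra of odd polynomials\<close>

definition fin_supp :: "'k::zero opol \<Rightarrow> bool" where
  "fin_supp p \<longleftrightarrow> finite {a. p a \<noteq> 0}"
definition fin_mon :: "mon \<Rightarrow> bool" where
  "fin_mon a \<longleftrightarrow> finite {i. a i \<noteq> 0}"

text \<open>Coefficient functions that are genuine polynomials; the side condition of most algebraic
  laws below.\<close>
definition finite_opol :: "'k::zero opol \<Rightarrow> bool" where
  "finite_opol p \<longleftrightarrow> fin_supp p \<and> (\<forall>a. p a \<noteq> 0 \<longrightarrow> fin_mon a)"

lemma finite_opol_fin_supp: "finite_opol p \<Longrightarrow> fin_supp p"
  by (simp add: finite_opol_def)

lemma osum_apply: "osum F I a = (\<Sum>i\<in>I. F i a)" by (simp add: osum_def)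
lemma oadd_apply: "oadd p q a = p a + q a" by (simp add: oadd_def)
lemma osmul_apply: "osmul c p a = c * p a" by (simp add: osmul_def)
lemma oneg_apply: "oneg p a = - p a" by (simp add: oneg_def)
lemma ozero_apply: "ozero a = 0" by (simp add: ozero_def)

lemma oneg_osmul: "oneg (p::'k::comm_ring_1 opol) = osmul (-1) p"
  by (simp add: oneg_def osmul_def)
lemma osmul_osmul: "osmul c (osmul d p) = osmul (c * d) (p::'k::comm_ring_1 opol)"
  by (simp add: osmul_def mult.assoc)
lemma osmul_one[simp]: "osmul 1 p = (p :: 'k::comm_ring_1 opol)"
  by (simp add: osmul_def)
lemma osmul_oadd: "osmul c (oadd p q) = oadd (osmul c p) (osmul (c::'k::comm_ring_1) q)"
  by (simp add: osmul_def oadd_def algebra_simps)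
lemma oadd_commute: "oadd p q = oadd q (p :: 'k::comm_ring_1 opol)"
  by (simp add: oadd_def add.commute)
lemma oadd_ozero_left[simp]: "oadd ozero p = (p :: 'k::comm_ring_1 opol)"
  by (simp add: oadd_def ozero_def)
lemma oadd_ozero_right[simp]: "oadd p ozero = (p :: 'k::comm_ring_1 opol)"
  by (simp add: oadd_def ozero_def)
lemma oneg_ozero[simp]: "oneg ozero = (ozero :: 'k::comm_ring_1 opol)"
  by (simp add: oneg_def ozero_def)

lemma osum_oadd: "osum (\<lambda>i. oadd (F i) (G i)) I = oadd (osum F I) (osum G I)"
  by (simp add: osum_def oadd_def sum.distrib)
lemma osum_cong: "(\<And>i. i \<in> I \<Longrightarrow> F i = G i) \<Longrightarrow> osum F I = osum G I"
  unfolding osum_def by (intro ext sum.cong refl) simp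
lemma osum_union:
  "finite A \<Longrightarrow> finite B \<Longrightarrow> A \<inter> B = {} \<Longrightarrow> osum F (A \<union> B) = oadd (osum F A) (osum F B)"
  by (simp add: osum_def oadd_def sum.union_disjoint)
lemma osum_image: "inj_on f A \<Longrightarrow> osum F (f ` A) = osum (\<lambda>x. F (f x)) A"
  by (simp add: osum_def sum.reindex)
lemma osum_singleton: "osum F {x} = F x"
  by (simp add: osum_def)
lemma osum_empty: "osum F {} = ozero"
  by (simp add: osum_def ozero_def)

lemma osum_nonzeroE:
  assumes "osum F I a \<noteq> 0" obtains i where "i \<in> I" "F i a \<noteq> 0"
  using assms unfolding osum_def by (meson sum.not_neutral_contains_not_neutral)

lemma fin_supp_ozero[simp]: "fin_supp ozero"
  by (simp add: fin_supp_def ozero_def)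
lemma finite_opol_ozero[simp]: "finite_opol ozero"
  by (simp add: finite_opol_def fin_supp_def ozero_def)
lemma fin_supp_mon_poly[simp]: "fin_supp (mon_poly a :: 'k::zero_neq_one opol)"
  by (simp add: fin_supp_def mon_poly_def)
lemma finite_opol_mon_poly[simp]: "fin_mon a \<Longrightarrow> finite_opol (mon_poly a :: 'k::zero_neq_one opol)"
  by (simp add: finite_opol_def fin_supp_def mon_poly_def)
lemma fin_supp_oadd[simp]: "fin_supp p \<Longrightarrow> fin_supp q \<Longrightarrow> fin_supp (oadd p (q::'k::monoid_add opol))"
  unfolding fin_supp_def oadd_def
  by (rule finite_subset[of _ "{a. p a \<noteq> 0} \<union> {a. q a \<noteq> 0}"]) auto
lemma finite_opol_oadd[simp]:
  "finite_opol p \<Longrightarrow> finite_opol q \<Longrightarrow> finite_opol (oadd p (q::'k::monoid_add opol))"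
  using fin_supp_oadd[of p q] unfolding finite_opol_def by (auto simp: oadd_def) (metis add.left_neutral)
lemma fin_supp_osmul[simp]: "fin_supp p \<Longrightarrow> fin_supp (osmul c (p::'k::semiring_0 opol))"
  unfolding fin_supp_def osmul_def by (rule finite_subset[of _ "{a. p a \<noteq> 0}"]) auto
lemma finite_opol_osmul[simp]: "finite_opol p \<Longrightarrow> finite_opol (osmul c (p::'k::semiring_0 opol))"
  using fin_supp_osmul[of p c] unfolding finite_opol_def by (auto simp: osmul_def) (metis mult_zero_right)
lemma fin_supp_osum[simp]:
  assumes "finite I" "\<And>i. i \<in> I \<Longrightarrow> fin_supp (F i)" shows "fin_supp (osum F I)"
proof -
  have "{a. osum F I a \<noteq> 0} \<subseteq> (\<Union>i\<in>I. {a. F i a \<noteq> 0})"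
    by (auto elim!: osum_nonzeroE)
  then show ?thesis using assms unfolding fin_supp_def by (meson finite_UN_I finite_subset)
qed

lemma finite_opol_osum[simp]:
  assumes "finite I" "\<And>i. i \<in> I \<Longrightarrow> finite_opol (F i)" shows "finite_opol (osum F I)"
proof -
  have "fin_mon a" if "osum F I a \<noteq> 0" for a
    using that by (rule osum_nonzeroE) (use assms in \<open>auto simp: finite_opol_def\<close>)
  then show ?thesis using fin_supp_osum[of I F] assms by (auto simp: finite_opol_def)
qed

lemma fin_mon_add[simp]: "fin_mon a \<Longrightarrow> fin_mon b \<Longrightarrow> fin_mon (\<lambda>i. a i + b i)"
  unfolding fin_mon_def by (rule finite_subset[of _ "{i. a i \<noteq> 0} \<union> {i. b i \<noteq> 0}"]) auto

lemma fin_mon_bounded: "fin_mon a \<Longrightarrow> \<exists>M. {i. a i \<noteq> 0} \<subseteq> {..<M}"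
  unfolding fin_mon_def by (rule exI[of _ "Suc (Max {i. a i \<noteq> 0})"]) (auto simp: less_Suc_eq_le)

lemma finite_mon_below:
  assumes "fin_mon c" shows "finite {a::mon. \<forall>i. a i \<le> c i}"
proof -
  let ?S = "{i. c i \<noteq> 0}"
  have S: "finite ?S" using assms by (simp add: fin_mon_def)
  have "{a. \<forall>i. a i \<le> c i} \<subseteq> {a. \<forall>i. (i \<in> ?S \<longrightarrow> a i \<in> {..sum c ?S}) \<and> (i \<notin> ?S \<longrightarrow> a i = 0)}"
  proof (intro subsetI CollectI allI conjI impI)
    fix a i assume "a \<in> {a. \<forall>i. a i \<le> c i}"
    then have le: "a i \<le> c i" by simp
    show "a i \<in> {..sum c ?S}" if "i \<in> ?S"
      using le member_le_sum[of i ?S c] S that by simp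
    show "a i = 0" if "i \<notin> ?S" using le that by simp
  qed
  then show ?thesis by (rule finite_subset) (rule finite_set_of_finite_funs[OF S finite_atMost])
qed

lemma opol_expansion:
  fixes p :: "'k::comm_ring_1 opol" assumes "fin_supp p"
  shows "p = osum (\<lambda>a. osmul (p a) (mon_poly a)) {a. p a \<noteq> 0}"
proof (rule ext)
  fix x
  have "osum (\<lambda>a. osmul (p a) (mon_poly a)) {a. p a \<noteq> 0} x = (\<Sum>i\<in>{a. p a \<noteq> 0}. if i = x then p i else 0)"
    unfolding osum_def by (rule sum.cong) (auto simp: osmul_def mon_poly_def)
  also have "\<dots> = p x" using assms by (simp add: fin_supp_def sum.delta)
  finally show "p x = osum (\<lambda>a. osmul (p a) (mon_poly a)) {a. p a \<noteq> 0} x" by simp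
qed

lemma omult_osum_left: "omult (osum F I) q = osum (\<lambda>i. omult (F i) q) I"
  unfolding omult_def osum_def
  by (rule ext, subst sum.swap) (simp add: sum_distrib_left sum_distrib_right)
lemma omult_osum_right: "omult q (osum F I) = osum (\<lambda>i. omult q (F i)) I"
  unfolding omult_def osum_def
  by (rule ext, subst sum.swap) (simp add: sum_distrib_left sum_distrib_right)
lemma omult_osmul_left: "omult (osmul c p) q = osmul c (omult p q)"
  unfolding omult_def osmul_def by (rule ext) (simp add: sum_distrib_left algebra_simps)
lemma omult_osmul_right: "omult q (osmul c p) = osmul c (omult q p)"
  unfolding omult_def osmul_def by (rule ext) (simp add: sum_distrib_left algebra_simps)
lemma omult_oadd_left: "omult (oadd p p') q = oadd (omult p q) (omult p' q)"
  unfolding omult_def oadd_def by (rule ext) (simp add: sum.distrib algebra_simps)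
lemma omult_oadd_right: "omult q (oadd p p') = oadd (omult q p) (omult q p')"
  unfolding omult_def oadd_def by (rule ext) (simp add: sum.distrib algebra_simps)
lemma omult_ozero_left[simp]: "omult ozero q = ozero"
  unfolding omult_def ozero_def by simp
lemma omult_ozero_right[simp]: "omult q ozero = ozero"
  unfolding omult_def ozero_def by simp
lemma omult_oneg_left: "omult (oneg p) q = oneg (omult p q)"
  by (simp add: oneg_osmul omult_osmul_left)
lemma omult_oneg_right: "omult q (oneg p) = oneg (omult q p)"
  by (simp add: oneg_osmul omult_osmul_right)

lemma omult_nonzeroE:
  assumes "omult p q c \<noteq> 0"
  obtains a where "\<forall>i. a i \<le> c i" "p a \<noteq> 0" "q (\<lambda>i. c i - a i) \<noteq> 0"
proof -
  from assms obtain a where "a \<in> {a. \<forall>i. a i \<le> c i}"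
    and nz: "msign a (\<lambda>i. c i - a i) * p a * q (\<lambda>i. c i - a i) \<noteq> 0"
    unfolding omult_def by (meson sum.not_neutral_contains_not_neutral)
  moreover from nz have "p a \<noteq> 0" "q (\<lambda>i. c i - a i) \<noteq> 0" by auto
  ultimately show ?thesis using that by simp
qed

lemma fin_supp_omult[simp]: assumes "fin_supp p" "fin_supp q" shows "fin_supp (omult p q)"
proof -
  have "{c. omult p q c \<noteq> 0} \<subseteq> (\<lambda>(a,b). (\<lambda>i. a i + b i)) ` ({a. p a \<noteq> 0} \<times> {b. q b \<noteq> 0})"
  proof
    fix c assume "c \<in> {c. omult p q c \<noteq> 0}"
    then obtain a where a: "\<forall>i. a i \<le> c i" "p a \<noteq> 0" "q (\<lambda>i. c i - a i) \<noteq> 0"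
      by (auto elim: omult_nonzeroE)
    then have "c = (\<lambda>(a,b). (\<lambda>i. a i + b i)) (a, (\<lambda>i. c i - a i))" by auto
    then show "c \<in> (\<lambda>(a,b). (\<lambda>i. a i + b i)) ` ({a. p a \<noteq> 0} \<times> {b. q b \<noteq> 0})"
      using a by (intro rev_image_eqI[of "(a, (\<lambda>i. c i - a i))"]) auto
  qed
  moreover have "finite ({a. p a \<noteq> 0} \<times> {b. q b \<noteq> 0})" using assms by (simp add: fin_supp_def)
  ultimately show ?thesis unfolding fin_supp_def using finite_subset finite_imageI by blast
qed

lemma finite_opol_omult[simp]:
  assumes "finite_opol p" "finite_opol q" shows "finite_opol (omult p q)"
proof -
  have "fin_mon c" if nz: "omult p q c \<noteq> 0" for c
  proof -
    obtain a where a: "\<forall>i. a i \<le> c i" "p a \<noteq> 0" "q (\<lambda>i. c i - a i) \<noteq> 0"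
      using nz by (auto elim: omult_nonzeroE)
    then have "c = (\<lambda>i. a i + (c i - a i))" by auto
    moreover have "fin_mon a" "fin_mon (\<lambda>i. c i - a i)" using a assms by (auto simp: finite_opol_def)
    ultimately show ?thesis by (metis fin_mon_add)
  qed
  then show ?thesis using assms by (simp add: finite_opol_def)
qed

lemma omult_mon_poly:
  assumes "fin_mon a" "fin_mon b"
  shows "omult (mon_poly a) (mon_poly b) = osmul (msign a b) (mon_poly (\<lambda>i. a i + b i) :: 'k::comm_ring_1 opol)"
proof (rule ext)
  fix c
  have split: "((\<lambda>i. c i - a' i) = b) \<longleftrightarrow> c = (\<lambda>i. a' i + b i)" if "\<forall>i. a' i \<le> c i" for a'
    using that by (auto simp: fun_eq_iff) (metis le_add_diff_inverse)
  have "omult (mon_poly a) (mon_poly b) c =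
     (\<Sum>a'\<in>{a'. \<forall>i. a' i \<le> c i}. if a' = a then (if c = (\<lambda>i. a i + b i) then msign a b else 0) else (0::'k))"
    unfolding omult_def mon_poly_def by (rule sum.cong) (auto simp: split)
  also have "\<dots> = (if c = (\<lambda>i. a i + b i) then msign a b else 0)"
  proof (cases "c = (\<lambda>i. a i + b i)")
    case True
    then have "finite {a'. \<forall>i. a' i \<le> c i}" using assms by (simp add: finite_mon_below)
    then show ?thesis using True by (simp add: sum.delta)
  qed simp
  also have "\<dots> = osmul (msign a b) (mon_poly (\<lambda>i. a i + b i)) c"
    by (simp add: osmul_def mon_poly_def)
  finally show "omult (mon_poly a) (mon_poly b) c = osmul (msign a b) (mon_poly (\<lambda>i. a i + b i) :: 'k opol) c" .
qed

definition mon_inv :: "mon \<Rightarrow> mon \<Rightarrow> nat" where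
  "mon_inv a b = (\<Sum>i\<in>{i. a i \<noteq> 0}. \<Sum>j<i. a i * b j)"

lemma msign_mon_inv: "msign a b = (-1) ^ mon_inv a b"
  by (simp add: msign_def mon_inv_def)

lemma mon_inv_bounded:
  assumes "{i. a i \<noteq> 0} \<subseteq> {..<M}"
  shows "mon_inv a b = (\<Sum>i<M. \<Sum>j<i. a i * b j)"
  unfolding mon_inv_def by (rule sum.mono_neutral_left) (use assms in auto)

text \<open>Both sides have exponent \<open>\<Sum>_(i>j) (a_i b_j + a_i c_j + b_i c_j)\<close>.\<close>
lemma msign_cocycle:
  assumes a: "fin_mon a" and b: "fin_mon b"
  shows "msign a b * msign (\<lambda>i. a i + b i) c = msign b c * (msign a (\<lambda>i. b i + c i) :: 'k::comm_ring_1)"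
proof -
  obtain M1 M2 where "{i. a i \<noteq> 0} \<subseteq> {..<M1}" "{i. b i \<noteq> 0} \<subseteq> {..<M2}"
    using fin_mon_bounded[OF a] fin_mon_bounded[OF b] by blast
  moreover define M where "M = M1 + M2"
  ultimately have sa: "{i. a i \<noteq> 0} \<subseteq> {..<M}" and sb: "{i. b i \<noteq> 0} \<subseteq> {..<M}"
    and sab: "{i. a i + b i \<noteq> 0} \<subseteq> {..<M}" by auto
  have "mon_inv a b + mon_inv (\<lambda>i. a i + b i) c = mon_inv b c + mon_inv a (\<lambda>i. b i + c i)"
    unfolding mon_inv_bounded[OF sa] mon_inv_bounded[OF sb] mon_inv_bounded[OF sab]
    by (simp add: algebra_simps sum.distrib)
  then show ?thesis by (simp add: msign_mon_inv power_add[symmetric])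
qed

lemma omult_assoc_mon_poly:
  assumes "fin_mon a" "fin_mon b" "fin_mon c"
  shows "omult (omult (mon_poly a) (mon_poly b)) (mon_poly c)
       = omult (mon_poly a) (omult (mon_poly b) (mon_poly c) :: 'k::comm_ring_1 opol)"
  using assms msign_cocycle[OF assms(1,2), of c, where 'k='k]
  by (simp add: omult_mon_poly omult_osmul_left omult_osmul_right osmul_osmul add.assoc)

text \<open>Linearity is only required on finitely supported arguments, which is where all
  operators of interest are defined by expansion into monomials.\<close>
definition opol_linear :: "('k::comm_ring_1 opol \<Rightarrow> 'k opol) \<Rightarrow> bool" where
  "opol_linear L \<longleftrightarrow>
     (\<forall>p q. fin_supp p \<longrightarrow> fin_supp q \<longrightarrow> L (oadd p q) = oadd (L p) (L q)) \<and>
     (\<forall>c p. fin_supp p \<longrightarrow> L (osmul c p) = osmul c (L p))"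

lemma opol_linearI:
  assumes "\<And>p q. fin_supp p \<Longrightarrow> fin_supp q \<Longrightarrow> L (oadd p q) = oadd (L p) (L q)"
    and "\<And>c p. fin_supp p \<Longrightarrow> L (osmul c p) = osmul c (L p)"
  shows "opol_linear L"
  unfolding opol_linear_def using assms by blast

lemma opol_linear_oadd_dist:
  "opol_linear L \<Longrightarrow> fin_supp p \<Longrightarrow> fin_supp q \<Longrightarrow> L (oadd p q) = oadd (L p) (L q)"
  unfolding opol_linear_def by blast
lemma opol_linear_osmul:
  "opol_linear L \<Longrightarrow> fin_supp p \<Longrightarrow> L (osmul c p) = osmul c (L p)"
  unfolding opol_linear_def by blast

lemma opol_linear_ozero:
  assumes "opol_linear L" shows "L ozero = ozero"
proof -
  have "L ozero = L (osmul 0 ozero)" by (simp add: osmul_def ozero_def)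
  also have "\<dots> = osmul 0 (L ozero)" by (rule opol_linear_osmul[OF assms]) simp
  also have "\<dots> = ozero" by (simp add: osmul_def ozero_def)
  finally show ?thesis .
qed

lemma osum_insert: "finite I \<Longrightarrow> i \<notin> I \<Longrightarrow> osum F (insert i I) = oadd (F i) (osum F I)"
  by (simp add: osum_def oadd_def)

lemma opol_linear_osum:
  assumes "opol_linear L" "finite I" "\<And>i. i \<in> I \<Longrightarrow> fin_supp (F i)"
  shows "L (osum F I) = osum (\<lambda>i. L (F i)) I"
  using assms(2,3)
proof (induction I rule: finite_induct)
  case empty then show ?case by (simp add: osum_empty opol_linear_ozero[OF assms(1)])
next
  case (insert i I) then show ?case by (simp add: osum_insert opol_linear_oadd_dist[OF assms(1)])
qed

lemma opol_linear_eqI: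
  assumes L: "opol_linear L" and L': "opol_linear L'"
    and mon: "\<And>a. fin_mon a \<Longrightarrow> L (mon_poly a) = L' (mon_poly a)"
    and p: "finite_opol p"
  shows "L p = L' p"
proof -
  let ?S = "{a. p a \<noteq> 0}"
  have fin: "finite ?S" and S: "\<And>a. a \<in> ?S \<Longrightarrow> fin_mon a"
    using p by (auto simp: finite_opol_def fin_supp_def)
  have p_eq: "p = osum (\<lambda>a. osmul (p a) (mon_poly a)) ?S"
    using p by (simp add: finite_opol_fin_supp opol_expansion)
  have "L p = osum (\<lambda>a. osmul (p a) (L (mon_poly a))) ?S"
    by (subst p_eq) (simp add: opol_linear_osum[OF L fin] opol_linear_osmul[OF L])
  also have "\<dots> = osum (\<lambda>a. osmul (p a) (L' (mon_poly a))) ?S"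
    by (rule osum_cong) (simp add: mon S)
  also have "\<dots> = L' p"
    by (subst (2) p_eq) (simp add: opol_linear_osum[OF L' fin] opol_linear_osmul[OF L'])
  finally show ?thesis .
qed

lemma opol_linear_id: "opol_linear (\<lambda>p. p)"
  by (rule opol_linearI) simp_all
lemma opol_linear_omult_left: "opol_linear (\<lambda>p. omult p q)"
  by (rule opol_linearI) (simp_all add: omult_oadd_left omult_osmul_left)
lemma opol_linear_omult_right: "opol_linear (\<lambda>p. omult q p)"
  by (rule opol_linearI) (simp_all add: omult_oadd_right omult_osmul_right)
lemma opol_linear_oneg: "opol_linear (\<lambda>p. oneg (p :: 'k::comm_ring_1 opol))"
  by (rule opol_linearI) (simp_all add: fun_eq_iff oneg_apply oadd_apply osmul_apply)

lemma opol_linear_comp: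
  assumes "opol_linear L1" "opol_linear L2" "\<And>p. fin_supp p \<Longrightarrow> fin_supp (L2 p)"
  shows "opol_linear (\<lambda>p. L1 (L2 p))"
  using assms by (intro opol_linearI) (simp_all add: opol_linear_oadd_dist opol_linear_osmul)

lemma opol_linear_oadd:
  assumes "opol_linear L1" "opol_linear L2"
  shows "opol_linear (\<lambda>p. oadd (L1 p) (L2 p))"
  using assms
  by (intro opol_linearI) (simp_all add: opol_linear_oadd_dist opol_linear_osmul osmul_oadd fun_eq_iff oadd_apply)

lemma omult_assoc:
  fixes p q r :: "'k::comm_ring_1 opol"
  assumes p: "finite_opol p" and q: "finite_opol q" and r: "finite_opol r"
  shows "omult (omult p q) r = omult p (omult q r)"
proof -
  have mon_mon: "omult (omult (mon_poly a) (mon_poly b)) r = omult (mon_poly a) (omult (mon_poly b) r)"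
    if "fin_mon a" "fin_mon b" for a b
    by (rule opol_linear_eqI[OF opol_linear_omult_right
          opol_linear_comp[OF opol_linear_omult_right opol_linear_omult_right] _ r])
       (simp_all add: that omult_assoc_mon_poly)
  have mon: "omult (omult (mon_poly a) q) r = omult (mon_poly a) (omult q r)" if "fin_mon a" for a
    by (rule opol_linear_eqI[OF opol_linear_comp[OF opol_linear_omult_left opol_linear_omult_right]
          opol_linear_comp[OF opol_linear_omult_right opol_linear_omult_left] _ q])
       (use r in \<open>simp_all add: that mon_mon finite_opol_fin_supp\<close>)
  show ?thesis
    by (rule opol_linear_eqI[OF opol_linear_comp[OF opol_linear_omult_left opol_linear_omult_left]
          opol_linear_omult_left _ p])
       (use q r in \<open>simp_all add: mon finite_opol_fin_supp\<close>)
qed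

text \<open>Both the substitution homomorphisms and the Demazure operators of the definitions are
  linear extensions of their values on monomials.\<close>
definition lin_ext :: "(mon \<Rightarrow> 'k::comm_ring_1 opol) \<Rightarrow> 'k opol \<Rightarrow> 'k opol" where
  "lin_ext \<Phi> p = osum (\<lambda>a. osmul (p a) (\<Phi> a)) {a. p a \<noteq> 0}"

lemma lin_ext_superset:
  assumes "finite T" "{a. p a \<noteq> 0} \<subseteq> T"
  shows "lin_ext \<Phi> p = osum (\<lambda>a. osmul (p a) (\<Phi> a)) T"
  unfolding lin_ext_def osum_def
  by (rule ext, rule sum.mono_neutral_left) (use assms in \<open>auto simp: osmul_def\<close>)

lemma lin_ext_osmul:
  assumes "fin_supp p" shows "lin_ext \<Phi> (osmul c p) = osmul c (lin_ext \<Phi> p)"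
proof -
  have "lin_ext \<Phi> (osmul c p) = osum (\<lambda>a. osmul (osmul c p a) (\<Phi> a)) {a. p a \<noteq> 0}"
    using assms by (intro lin_ext_superset) (auto simp: fin_supp_def osmul_def)
  then show ?thesis
    by (simp add: lin_ext_def osum_def osmul_def sum_distrib_left mult.assoc)
qed

lemma lin_ext_oadd:
  assumes "fin_supp p" "fin_supp q"
  shows "lin_ext \<Phi> (oadd p q) = oadd (lin_ext \<Phi> p) (lin_ext \<Phi> q)"
proof -
  let ?T = "{a. p a \<noteq> 0} \<union> {a. q a \<noteq> 0}"
  have T: "finite ?T" using assms by (simp add: fin_supp_def)
  have "lin_ext \<Phi> r = osum (\<lambda>a. osmul (r a) (\<Phi> a)) ?T" if "r \<in> {p, q, oadd p q}" for r
    using that by (intro lin_ext_superset[OF T]) (auto simp: oadd_def)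
  then show ?thesis by (simp add: osum_def osmul_def oadd_def sum.distrib algebra_simps)
qed

lemma opol_linear_lin_ext: "opol_linear (lin_ext \<Phi>)"
  by (rule opol_linearI) (simp_all add: lin_ext_oadd lin_ext_osmul)

lemma lin_ext_ozero[simp]: "lin_ext \<Phi> ozero = ozero"
  by (simp add: lin_ext_def ozero_def osum_def)

lemma lin_ext_mon_poly[simp]: "lin_ext \<Phi> (mon_poly a) = (\<Phi> a :: 'k::comm_ring_1 opol)"
proof -
  have "{b. (mon_poly a :: 'k opol) b \<noteq> 0} = {a}" by (auto simp: mon_poly_def)
  then show ?thesis by (simp add: lin_ext_def osum_def osmul_def mon_poly_def)
qed

lemma lin_ext_infinite: "infinite {a. p a \<noteq> 0} \<Longrightarrow> lin_ext \<Phi> p = ozero"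
  by (simp add: lin_ext_def osum_def ozero_def)

lemma fin_supp_lin_ext[simp]: "(\<And>a. fin_supp (\<Phi> a)) \<Longrightarrow> fin_supp (lin_ext \<Phi> p)"
  by (cases "finite {a. p a \<noteq> 0}") (simp add: lin_ext_def, simp add: lin_ext_infinite)

lemma finite_opol_lin_ext[simp]: "(\<And>a. finite_opol (\<Phi> a)) \<Longrightarrow> finite_opol (lin_ext \<Phi> p)"
  by (cases "finite {a. p a \<noteq> 0}") (simp add: lin_ext_def, simp add: lin_ext_infinite)

section \<open>Words of generators\<close>

definition gen_prod :: "(nat \<Rightarrow> 'k::comm_ring_1 opol) \<Rightarrow> nat list \<Rightarrow> 'k opol" where
  "gen_prod g w = foldr (\<lambda>i acc. omult (g i) acc) w oone"

lemma gen_prod_Nil[simp]: "gen_prod g [] = oone"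
  by (simp add: gen_prod_def)
lemma gen_prod_Cons[simp]: "gen_prod g (i # w) = omult (g i) (gen_prod g w)"
  by (simp add: gen_prod_def)
lemma word_eval_gen_prod: "word_eval = gen_prod ovar"
  by (rule ext) (simp add: word_eval_def gen_prod_def)
lemma word_eval_Nil[simp]: "word_eval [] = oone"
  by (simp add: word_eval_def)
lemma word_eval_Cons[simp]: "word_eval (i # w) = omult (ovar i) (word_eval w)"
  by (simp add: word_eval_def)

lemma osubst_lin_ext: "osubst g = lin_ext (\<lambda>a. gen_prod g (mono_word a))"
  by (rule ext) (simp add: osubst_def lin_ext_def gen_prod_def)
lemma odem_lin_ext: "odem j = lin_ext (\<lambda>a. dem_word j (mono_word a))"
  by (rule ext) (simp add: odem_def lin_ext_def)

definition word_exp :: "nat list \<Rightarrow> mon" where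
  "word_exp w = (\<lambda>i. count_list w i)"
definition unit_mon :: "nat \<Rightarrow> mon" where
  "unit_mon l = (\<lambda>j. if j = l then 1 else 0)"
definition count_less :: "nat \<Rightarrow> nat list \<Rightarrow> nat" where
  "count_less l w = length (filter (\<lambda>y. y < l) w)"

fun inversions :: "nat list \<Rightarrow> nat" where
  "inversions [] = 0"
| "inversions (l # w) = count_less l w + inversions w"

definition word_sign :: "nat list \<Rightarrow> 'k::comm_ring_1" where
  "word_sign w = (-1) ^ inversions w"

lemma ovar_unit_mon: "ovar l = mon_poly (unit_mon l)"
  by (simp add: ovar_def unit_mon_def)
lemma oone_mon_poly: "oone = mon_poly (\<lambda>_. 0)"
  by (simp add: oone_def)

lemma fin_mon_zero[simp]: "fin_mon (\<lambda>_. 0)"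
  by (simp add: fin_mon_def)
lemma fin_mon_unit_mon[simp]: "fin_mon (unit_mon l)"
  by (simp add: fin_mon_def unit_mon_def)
lemma fin_mon_word_exp[simp]: "fin_mon (word_exp w)"
proof -
  have "{i. word_exp w i \<noteq> 0} \<subseteq> set w" by (auto simp: word_exp_def count_list_0_iff)
  then show ?thesis unfolding fin_mon_def by (rule finite_subset) simp
qed

lemma finite_opol_oone[simp]: "finite_opol (oone :: 'k::comm_ring_1 opol)"
  by (simp add: oone_def)
lemma finite_opol_ovar[simp]: "finite_opol (ovar l :: 'k::comm_ring_1 opol)"
  by (simp add: ovar_unit_mon)
lemma fin_supp_ovar[simp]: "fin_supp (ovar l :: 'k::comm_ring_1 opol)"
  by (simp add: ovar_unit_mon)
lemma finite_opol_gen_prod[simp]: "(\<And>i. finite_opol (g i)) \<Longrightarrow> finite_opol (gen_prod g w)"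
  by (induction w) simp_all
lemma finite_opol_word_eval[simp]: "finite_opol (word_eval w :: 'k::comm_ring_1 opol)"
  by (simp add: word_eval_gen_prod)

lemma word_exp_Cons: "word_exp (l # w) = (\<lambda>i. unit_mon l i + word_exp w i)"
  by (rule ext) (simp add: word_exp_def unit_mon_def)

lemma count_less_word_exp: "count_less l w = (\<Sum>j<l. word_exp w j)"
proof (induction w)
  case Nil then show ?case by (simp add: count_less_def word_exp_def)
next
  case (Cons a w)
  have "(\<Sum>j<l. word_exp (a # w) j) = (\<Sum>j<l. word_exp w j + (if j = a then 1 else 0))"
    by (rule sum.cong) (auto simp: word_exp_def)
  also have "\<dots> = (\<Sum>j<l. word_exp w j) + (if a < l then 1 else 0)"
    by (simp add: sum.distrib)
  finally show ?case using Cons by (simp add: count_less_def)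
qed

lemma msign_unit_mon: "msign (unit_mon l) c = (-1) ^ (\<Sum>j<l. c j)"
proof -
  have "{i. unit_mon l i \<noteq> 0} = {l}" by (auto simp: unit_mon_def)
  then show ?thesis by (simp add: msign_def unit_mon_def)
qed

lemma word_eval_signed_mon:
  "word_eval w = osmul (word_sign w) (mon_poly (word_exp w) :: 'k::comm_ring_1 opol)"
proof (induction w)
  case Nil then show ?case by (simp add: word_sign_def oone_def osmul_def word_exp_def)
next
  case (Cons l w)
  have "word_eval (l # w) = omult (mon_poly (unit_mon l)) (osmul (word_sign w) (mon_poly (word_exp w)) :: 'k opol)"
    by (simp add: Cons ovar_unit_mon)
  also have "\<dots> = osmul (word_sign w * msign (unit_mon l) (word_exp w)) (mon_poly (word_exp (l # w)))"
    by (simp add: omult_osmul_right omult_mon_poly osmul_osmul word_exp_Cons)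
  also have "word_sign w * msign (unit_mon l) (word_exp w) = (word_sign (l # w) :: 'k)"
    by (simp add: word_sign_def msign_unit_mon count_less_word_exp power_add)
  finally show ?case .
qed

lemma count_list_concat_map:
  "count_list (concat (map f L)) x = sum_list (map (\<lambda>i. count_list (f i) x) L)"
  by (induction L) simp_all
lemma count_list_replicate: "count_list (replicate n i) x = (if i = x then n else 0)"
  by (induction n) auto

lemma word_exp_mono_word: assumes "fin_mon a" shows "word_exp (mono_word a) = a"
proof (rule ext)
  fix x
  let ?S = "{i. a i \<noteq> 0}"
  have fin: "finite ?S" using assms by (simp add: fin_mon_def)
  have "word_exp (mono_word a) x = sum_list (map (\<lambda>i. if i = x then a i else 0) (sorted_list_of_set ?S))"
    by (simp add: word_exp_def mono_word_def count_list_concat_map count_list_replicate)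
  also have "\<dots> = (\<Sum>i\<in>?S. if i = x then a i else 0)"
    using fin by (simp add: sum_list_distinct_conv_sum_set)
  also have "\<dots> = a x" using fin by (simp add: sum.delta)
  finally show "word_exp (mono_word a) x = a x" .
qed

lemma sorted_concat_replicate: "sorted L \<Longrightarrow> sorted (concat (map (\<lambda>i. replicate (f i) i) L))"
proof (induction L)
  case (Cons i L) then show ?case by (auto simp: sorted_append)
qed simp

lemma sorted_mono_word: "sorted (mono_word a)"
  unfolding mono_word_def by (rule sorted_concat_replicate) simp

lemma inversions_sorted: "sorted w \<Longrightarrow> inversions w = 0"
  by (induction w) (auto simp: count_less_def filter_empty_conv)

lemma word_sign_sorted: "sorted w \<Longrightarrow> word_sign w = 1"
  by (simp add: word_sign_def inversions_sorted)

lemma word_sign_square: "word_sign w * word_sign w = (1::'k::comm_ring_1)"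
  by (simp add: word_sign_def power_mult_distrib[symmetric])

lemma word_eval_mono_word: "fin_mon a \<Longrightarrow> word_eval (mono_word a) = (mon_poly a :: 'k::comm_ring_1 opol)"
  by (simp add: word_eval_signed_mon word_exp_mono_word word_sign_sorted sorted_mono_word)

lemma word_exp_mset: "word_exp w = count (mset w)"
  by (simp add: word_exp_def fun_eq_iff count_mset)

lemma word_exp_perm: "mset u = mset v \<Longrightarrow> word_exp u = word_exp v"
  by (simp add: word_exp_mset)

lemma mono_word_word_exp: "mono_word (word_exp w) = sort w"
proof (rule properties_for_sort[symmetric])
  have "word_exp (mono_word (word_exp w)) = word_exp w" by (rule word_exp_mono_word) simp
  then show "mset (mono_word (word_exp w)) = mset w"
    by (simp add: word_exp_mset multiset_eqI)
qed (rule sorted_mono_word)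

lemma count_less_perm: assumes "mset u = mset v" shows "count_less l u = count_less l v"
  by (simp only: count_less_word_exp word_exp_perm[OF assms])

lemma word_eval_perm:
  assumes "mset u = mset v"
  shows "word_eval u = osmul (word_sign u * word_sign v) (word_eval v :: 'k::comm_ring_1 opol)"
  using word_exp_perm[OF assms]
  by (simp add: word_eval_signed_mon[of u] word_eval_signed_mon[of v] osmul_osmul mult.assoc word_sign_square)

text \<open>A function on words that anticommutes distinct adjacent leading letters is determined
  by its values on sorted words.  The second hypothesis propagates a relation between the
  values on two tails to the words with a common first letter; it mentions the tails'
  evaluations because the Demazure operator of a word depends on them.\<close>
context
  fixes \<Phi> :: "nat list \<Rightarrow> 'k::comm_ring_1 opol"
  assumes swap: "\<And>i y w. i \<noteq> y \<Longrightarrow> \<Phi> (i # y # w) = oneg (\<Phi> (y # i # w))"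
    and Cons_cong: "\<And>y u u' c. mset u = mset u' \<Longrightarrow> \<Phi> u = osmul c (\<Phi> u') \<Longrightarrow>
        word_eval u = osmul c (word_eval u') \<Longrightarrow> \<Phi> (y # u) = osmul c (\<Phi> (y # u'))"
begin

lemma word_fun_insort:
  "sorted v \<Longrightarrow> \<Phi> (l # v) = osmul ((-1) ^ count_less l v) (\<Phi> (insort l v))"
proof (induction v)
  case Nil then show ?case by (simp add: count_less_def)
next
  case (Cons y v)
  have v: "sorted v" and yv: "\<forall>z\<in>set v. y \<le> z" using Cons.prems by auto
  show ?case
  proof (cases "l \<le> y")
    case True
    then have "count_less l (y # v) = 0" using yv by (auto simp: count_less_def filter_empty_conv)
    then show ?thesis using True by simp
  next
    case False
    have ms: "mset (l # v) = mset (insort l v)" by simp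
    have "word_sign (insort l v) = (1::'k)" by (rule word_sign_sorted) (simp add: v sorted_insort)
    moreover have "word_sign (l # v) = ((-1) ^ count_less l v :: 'k)"
      by (simp add: word_sign_def inversions_sorted[OF v])
    ultimately have ev: "word_eval (l # v) = osmul ((-1) ^ count_less l v) (word_eval (insort l v) :: 'k opol)"
      using word_eval_perm[OF ms, where 'k='k] by simp
    have "\<Phi> (l # y # v) = oneg (\<Phi> (y # l # v))" using False by (intro swap) simp
    also have "\<Phi> (y # l # v) = osmul ((-1) ^ count_less l v) (\<Phi> (y # insort l v))"
      by (rule Cons_cong[OF ms Cons.IH[OF v] ev])
    finally show ?thesis using False by (simp add: count_less_def oneg_osmul osmul_osmul)
  qed
qed

lemma word_fun_sort: "\<Phi> w = osmul (word_sign w) (\<Phi> (sort w))"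
proof (induction w)
  case Nil then show ?case by (simp add: word_sign_def)
next
  case (Cons l w)
  have ms: "mset w = mset (sort w)" by simp
  have ev: "word_eval w = osmul (word_sign w) (word_eval (sort w) :: 'k opol)"
    using word_eval_perm[OF ms, where 'k='k] by (simp add: word_sign_sorted)
  have "\<Phi> (l # w) = osmul (word_sign w) (\<Phi> (l # sort w))" by (rule Cons_cong[OF ms Cons.IH ev])
  also have "\<Phi> (l # sort w) = osmul ((-1) ^ count_less l (sort w)) (\<Phi> (insort l (sort w)))"
    by (rule word_fun_insort) simp
  finally show ?case
    by (simp add: osmul_osmul count_less_perm[OF ms, symmetric] word_sign_def power_add mult.commute)
qed

end

definition anticommuting :: "(nat \<Rightarrow> 'k::comm_ring_1 opol) \<Rightarrow> bool" where
  "anticommuting g \<longleftrightarrow> (\<forall>i. finite_opol (g i)) \<and>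
     (\<forall>i y. i \<noteq> y \<longrightarrow> omult (g i) (g y) = oneg (omult (g y) (g i)))"

lemma anticommuting_finite_opol: "anticommuting g \<Longrightarrow> finite_opol (g i)"
  by (simp add: anticommuting_def)

lemma anticommuting_omult:
  assumes g: "anticommuting g" and "i \<noteq> y" and P: "finite_opol P"
  shows "omult (g i) (omult (g y) P) = oneg (omult (g y) (omult (g i) P))"
proof -
  have gi: "\<And>i. finite_opol (g i)" using g by (simp add: anticommuting_def)
  have "omult (g i) (g y) = oneg (omult (g y) (g i))" using g \<open>i \<noteq> y\<close> unfolding anticommuting_def by blast
  then show ?thesis
    by (simp add: omult_assoc[OF gi gi P, symmetric] omult_oneg_left)
qed

lemma gen_prod_sort:
  assumes "anticommuting g"
  shows "gen_prod g w = osmul (word_sign w) (gen_prod g (sort w))"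
proof (rule word_fun_sort)
  show "gen_prod g (i # y # w) = oneg (gen_prod g (y # i # w))" if "i \<noteq> y" for i y w
    using anticommuting_omult[OF assms that] assms by (simp add: anticommuting_finite_opol)
qed (simp add: omult_osmul_right)

lemma omult_oone_left: "finite_opol p \<Longrightarrow> omult oone p = (p :: 'k::comm_ring_1 opol)"
  by (rule opol_linear_eqI[OF opol_linear_omult_right opol_linear_id])
     (simp_all add: oone_mon_poly omult_mon_poly msign_def)

lemma omult_oone_right: "finite_opol p \<Longrightarrow> omult p oone = (p :: 'k::comm_ring_1 opol)"
  by (rule opol_linear_eqI[OF opol_linear_omult_left opol_linear_id])
     (simp_all add: oone_mon_poly omult_mon_poly msign_def)

lemma word_eval_append: "word_eval (u @ v) = omult (word_eval u) (word_eval v :: 'k::comm_ring_1 opol)"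
  by (induction u) (simp_all add: omult_oone_left omult_assoc)

lemma word_eval_single: "word_eval [i] = (ovar i :: 'k::comm_ring_1 opol)"
  by (simp add: omult_oone_right)

lemma ovar_anticomm:
  assumes "i \<noteq> y"
  shows "omult (ovar i) (ovar y) = oneg (omult (ovar y) (ovar i) :: 'k::comm_ring_1 opol)"
proof -
  have sum_unit: "(\<Sum>j<n. unit_mon l j) = (if l < n then 1 else 0)" for l n
    by (simp add: unit_mon_def sum.delta)
  have "(\<lambda>k. unit_mon i k + unit_mon y k) = (\<lambda>k. unit_mon y k + unit_mon i k)"
    by (simp add: add.commute)
  moreover have "(-1::'k) ^ (if y < i then 1 else 0) = - ((-1) ^ (if i < y then 1 else 0))"
    using assms by auto
  ultimately show ?thesis
    by (simp add: ovar_unit_mon omult_mon_poly msign_unit_mon sum_unit oneg_osmul osmul_osmul)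
qed

lemma anticommuting_signed_ovar:
  assumes "inj h"
  shows "anticommuting (\<lambda>l. osmul (c l) (ovar (h l)) :: 'k::comm_ring_1 opol)"
  unfolding anticommuting_def
proof (intro conjI allI impI)
  fix i y :: nat assume "i \<noteq> y"
  then have "omult (ovar (h i)) (ovar (h y)) = oneg (omult (ovar (h y)) (ovar (h i)) :: 'k opol)"
    using assms by (intro ovar_anticomm) (simp add: inj_eq)
  then show "omult (osmul (c i) (ovar (h i))) (osmul (c y) (ovar (h y)))
      = oneg (omult (osmul (c y) (ovar (h y))) (osmul (c i) (ovar (h i))) :: 'k opol)"
    by (simp add: omult_osmul_left omult_osmul_right osmul_osmul oneg_osmul mult.commute)
qed simp

text \<open>The well-definedness of a homomorphism prescribed on anticommuting generators.\<close>
lemma osubst_word_eval: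
  assumes "anticommuting g"
  shows "osubst g (word_eval w) = gen_prod g w"
proof -
  have "osubst g (word_eval w) = osmul (word_sign w) (gen_prod g (mono_word (word_exp w)))"
    by (simp add: osubst_lin_ext word_eval_signed_mon[of w] lin_ext_osmul)
  also have "\<dots> = gen_prod g w"
    by (simp add: gen_prod_sort[OF assms, of w] mono_word_word_exp osmul_osmul word_sign_square)
  finally show ?thesis .
qed

lemma opol_linear_osubst: "opol_linear (osubst g)"
  by (simp add: osubst_lin_ext opol_linear_lin_ext)

lemma finite_opol_osubst[simp]: "(\<And>i. finite_opol (g i)) \<Longrightarrow> finite_opol (osubst g p)"
  by (simp add: osubst_lin_ext)

lemma osubst_omult_ovar:
  assumes g: "anticommuting g" and P: "finite_opol P"
  shows "osubst g (omult (ovar l) P) = omult (g l) (osubst g P)"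
proof (rule opol_linear_eqI[OF _ _ _ P])
  show "opol_linear (\<lambda>P. osubst g (omult (ovar l) P))"
    by (rule opol_linear_comp[OF opol_linear_osubst opol_linear_omult_right]) simp
  show "opol_linear (\<lambda>P. omult (g l) (osubst g P))"
    by (rule opol_linear_comp[OF opol_linear_omult_right opol_linear_osubst])
       (simp add: finite_opol_fin_supp anticommuting_finite_opol[OF g])
  fix b :: mon assume "fin_mon b"
  then have word: "omult (ovar l) (mon_poly b) = word_eval (l # mono_word b)"
    by (simp add: word_eval_mono_word)
  have "osubst g (omult (ovar l) (mon_poly b)) = gen_prod g (l # mono_word b)"
    unfolding word by (rule osubst_word_eval[OF g])
  also have "\<dots> = omult (g l) (osubst g (mon_poly b))"
    by (simp add: osubst_lin_ext)
  finally show "osubst g (omult (ovar l) (mon_poly b)) = omult (g l) (osubst g (mon_poly b))" .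
qed

lemma osubst_ovar: "finite_opol p \<Longrightarrow> osubst ovar p = (p :: 'k::comm_ring_1 opol)"
  by (rule opol_linear_eqI[OF opol_linear_osubst opol_linear_id])
     (simp_all add: osubst_lin_ext word_eval_gen_prod[symmetric] word_eval_mono_word)

definition adj_swap :: "nat \<Rightarrow> nat \<Rightarrow> nat" where
  "adj_swap j i = (if i = j then j + 1 else if i = j + 1 then j else i)"
definition simg_sign :: "nat \<Rightarrow> nat \<Rightarrow> 'k::comm_ring_1" where
  "simg_sign j i = (if i = j \<or> i = j + 1 then 1 else -1)"

lemma simg_eq: "simg j i = osmul (simg_sign j i) (ovar (adj_swap j i) :: 'k::comm_ring_1 opol)"
  by (auto simp: simg_def simg_sign_def adj_swap_def oneg_osmul osmul_def)

lemma anticommuting_simg: "anticommuting (simg j :: nat \<Rightarrow> 'k::comm_ring_1 opol)"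
proof -
  have "inj (adj_swap j)" by (rule injI) (auto simp: adj_swap_def split: if_splits)
  then show ?thesis
    unfolding simg_eq[abs_def] by (rule anticommuting_signed_ovar)
qed

lemma anticommuting_shift: "anticommuting (\<lambda>l. ovar (l + i) :: 'k::comm_ring_1 opol)"
  using anticommuting_signed_ovar[of "\<lambda>l. l + i" "\<lambda>_. 1"] by (simp add: inj_def)

lemma osigma_word_eval: "osigma i (word_eval w) = (word_eval (map (\<lambda>l. l + i) w) :: 'k::comm_ring_1 opol)"
proof -
  have "gen_prod (\<lambda>l. ovar (l + i)) w = (word_eval (map (\<lambda>l. l + i) w) :: 'k opol)"
    by (induction w) simp_all
  then show ?thesis by (simp add: osigma_def osubst_word_eval[OF anticommuting_shift])
qed

section \<open>Odd Demazure operators\<close>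

definition dem_coeff :: "nat \<Rightarrow> nat \<Rightarrow> 'k::comm_ring_1" where
  "dem_coeff j i = (if i = j then 1 else if i = j + 1 then -1 else 0)"

lemma dem_word_Cons:
  "dem_word j (i # w) = oadd (osmul (dem_coeff j i) (word_eval w)) (omult (simg j i) (dem_word j w))"
  by (simp add: dem_coeff_def)

declare dem_word.simps(2)[simp del]

lemma finite_opol_simg[simp]: "finite_opol (simg j i :: 'k::comm_ring_1 opol)"
  by (simp add: simg_eq)
lemma fin_supp_simg[simp]: "fin_supp (simg j i :: 'k::comm_ring_1 opol)"
  by (simp add: finite_opol_fin_supp)
lemma finite_opol_dem_word[simp]: "finite_opol (dem_word j w :: 'k::comm_ring_1 opol)"
  by (induction w) (simp_all add: dem_word_Cons)

lemma dem_word_Cons_Cons: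
  "dem_word j (i # y # w) =
     oadd (omult (oadd (osmul (dem_coeff j i) (ovar y)) (osmul (dem_coeff j y) (simg j i))) (word_eval w))
          (omult (simg j i) (omult (simg j y) (dem_word j w)) :: 'k::comm_ring_1 opol)"
  by (simp add: dem_word_Cons omult_oadd_left omult_oadd_right omult_osmul_left omult_osmul_right
      fun_eq_iff oadd_apply add.assoc)

lemma dem_coeff_simg_antisym:
  assumes "i \<noteq> y"
  shows "oadd (osmul (dem_coeff j i) (ovar y)) (osmul (dem_coeff j y) (simg j i))
       = oneg (oadd (osmul (dem_coeff j y) (ovar i)) (osmul (dem_coeff j i) (simg j y)) :: 'k::comm_ring_1 opol)"
  using assms by (auto simp: dem_coeff_def simg_def fun_eq_iff oadd_def osmul_def oneg_def)

text \<open>\<open>odem\<close> is defined through the sorted words of monomials, while the Leibniz rule needs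
  \<open>dem_word\<close> on arbitrary words.\<close>
lemma dem_word_sort: "dem_word j w = osmul (word_sign w) (dem_word j (sort w) :: 'k::comm_ring_1 opol)"
proof (rule word_fun_sort)
  fix i y :: nat and w :: "nat list" assume iy: "i \<noteq> y"
  show "dem_word j (i # y # w) = oneg (dem_word j (y # i # w) :: 'k opol)"
    unfolding dem_word_Cons_Cons dem_coeff_simg_antisym[OF iy]
      anticommuting_omult[OF anticommuting_simg iy finite_opol_dem_word]
    by (simp add: omult_oneg_left fun_eq_iff oadd_apply oneg_apply)
next
  fix y u u' and c :: 'k
  assume "dem_word j u = osmul c (dem_word j u')" "word_eval u = osmul c (word_eval u' :: 'k opol)"
  then show "dem_word j (y # u) = osmul c (dem_word j (y # u'))"
    by (simp add: dem_word_Cons omult_osmul_right osmul_osmul osmul_oadd mult.commute)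
qed

lemma odem_word_eval: "odem j (word_eval w) = (dem_word j w :: 'k::comm_ring_1 opol)"
proof -
  have "odem j (word_eval w) = osmul (word_sign w) (dem_word j (mono_word (word_exp w)) :: 'k opol)"
    by (simp add: odem_lin_ext word_eval_signed_mon[of w] lin_ext_osmul)
  also have "\<dots> = dem_word j w"
    by (simp add: dem_word_sort[of j w] mono_word_word_exp osmul_osmul word_sign_square)
  finally show ?thesis .
qed

lemma opol_linear_odem: "opol_linear (odem j)" by (simp add: odem_lin_ext opol_linear_lin_ext)
lemma finite_opol_odem[simp]: "finite_opol (odem j p :: 'k::comm_ring_1 opol)" by (simp add: odem_lin_ext)
lemma fin_supp_odem[simp]: "fin_supp (odem j p :: 'k::comm_ring_1 opol)" by (simp add: finite_opol_fin_supp)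
lemma opol_linear_osj: "opol_linear (osj j)" by (simp add: osj_def opol_linear_osubst)
lemma finite_opol_osj[simp]: "finite_opol (osj j p :: 'k::comm_ring_1 opol)" by (simp add: osj_def)
lemma fin_supp_osj[simp]: "fin_supp (osj j p :: 'k::comm_ring_1 opol)" by (simp add: finite_opol_fin_supp)

lemma odem_oadd: "fin_supp p \<Longrightarrow> fin_supp q \<Longrightarrow> odem j (oadd p q) = oadd (odem j p) (odem j q)"
  by (simp add: odem_lin_ext lin_ext_oadd)
lemma odem_osmul: "fin_supp p \<Longrightarrow> odem j (osmul c p) = osmul c (odem j p)"
  by (simp add: odem_lin_ext lin_ext_osmul)
lemma odem_osum:
  "finite I \<Longrightarrow> (\<And>i. i \<in> I \<Longrightarrow> fin_supp (F i)) \<Longrightarrow> odem j (osum F I) = osum (\<lambda>i. odem j (F i)) I"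
  by (simp add: odem_lin_ext opol_linear_osum[OF opol_linear_lin_ext])
lemma odem_ozero[simp]: "odem j ozero = ozero" by (simp add: odem_lin_ext)

lemma osj_mon_poly: "osj j (mon_poly a) = gen_prod (simg j) (mono_word a)"
  by (simp add: osj_def osubst_lin_ext)
lemma odem_mon_poly: "odem j (mon_poly a) = dem_word j (mono_word a)"
  by (simp add: odem_lin_ext)

lemma dem_word_append:
  "dem_word j (u @ v) =
     oadd (omult (dem_word j u) (word_eval v)) (omult (gen_prod (simg j) u) (dem_word j v) :: 'k::comm_ring_1 opol)"
proof (induction u)
  case Nil then show ?case by (simp add: omult_oone_left)
next
  case (Cons l u)
  let ?s = "simg j l :: 'k opol"
  have "dem_word j ((l # u) @ v) = oadd (osmul (dem_coeff j l) (omult (word_eval u) (word_eval v)))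
      (omult ?s (oadd (omult (dem_word j u) (word_eval v)) (omult (gen_prod (simg j) u) (dem_word j v))))"
    by (simp only: append_Cons dem_word_Cons word_eval_append Cons)
  also have "\<dots> = oadd (osmul (dem_coeff j l) (omult (word_eval u) (word_eval v)))
      (oadd (omult (omult ?s (dem_word j u)) (word_eval v)) (omult (omult ?s (gen_prod (simg j) u)) (dem_word j v)))"
    by (simp add: omult_oadd_right omult_assoc)
  also have "\<dots> = oadd (omult (dem_word j (l # u)) (word_eval v)) (omult (gen_prod (simg j) (l # u)) (dem_word j v))"
    by (simp add: dem_word_Cons omult_oadd_left omult_osmul_left fun_eq_iff oadd_apply add.assoc)
  finally show ?case .
qed

lemma odem_omult:
  fixes p q :: "'k::comm_ring_1 opol"
  assumes p: "finite_opol p" and q: "finite_opol q"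
  shows "odem j (omult p q) = oadd (omult (odem j p) q) (omult (osj j p) (odem j q))"
proof -
  have inner: "odem j (omult (mon_poly a) q) = oadd (omult (odem j (mon_poly a)) q) (omult (osj j (mon_poly a)) (odem j q))"
    if a: "fin_mon a" for a
  proof (rule opol_linear_eqI[where L="\<lambda>q. odem j (omult (mon_poly a) q)"
        and L'="\<lambda>q. oadd (omult (odem j (mon_poly a)) q) (omult (osj j (mon_poly a)) (odem j q))", OF _ _ _ q])
    show "opol_linear (\<lambda>q. odem j (omult (mon_poly a) q) :: 'k opol)"
      by (rule opol_linear_comp[OF opol_linear_odem opol_linear_omult_right]) simp
    show "opol_linear (\<lambda>q. oadd (omult (odem j (mon_poly a)) q) (omult (osj j (mon_poly a)) (odem j q)) :: 'k opol)"
      by (rule opol_linear_oadd[OF opol_linear_omult_right opol_linear_comp[OF opol_linear_omult_right opol_linear_odem]]) simp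
    fix b :: mon assume b: "fin_mon b"
    have e: "omult (mon_poly a) (mon_poly b) = (word_eval (mono_word a @ mono_word b) :: 'k opol)"
      by (simp add: word_eval_append word_eval_mono_word a b)
    show "odem j (omult (mon_poly a) (mon_poly b)) =
        oadd (omult (odem j (mon_poly a)) (mon_poly b)) (omult (osj j (mon_poly a)) (odem j (mon_poly b)) :: 'k opol)"
      unfolding e odem_word_eval dem_word_append by (simp add: odem_mon_poly osj_mon_poly word_eval_mono_word b)
  qed
  show ?thesis
  proof (rule opol_linear_eqI[where L="\<lambda>p. odem j (omult p q)"
        and L'="\<lambda>p. oadd (omult (odem j p) q) (omult (osj j p) (odem j q))", OF _ _ _ p])
    show "opol_linear (\<lambda>p. odem j (omult p q) :: 'k opol)"
      by (rule opol_linear_comp[OF opol_linear_odem opol_linear_omult_left]) (simp add: q finite_opol_fin_supp)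
    show "opol_linear (\<lambda>p. oadd (omult (odem j p) q) (omult (osj j p) (odem j q)) :: 'k opol)"
      by (rule opol_linear_oadd[OF opol_linear_comp[OF opol_linear_omult_left opol_linear_odem]
            opol_linear_comp[OF opol_linear_omult_left opol_linear_osj]]) simp_all
  qed (rule inner)
qed

lemma odem_ovar: "odem j (ovar i) = osmul (dem_coeff j i) (oone :: 'k::comm_ring_1 opol)"
proof -
  have "odem j (ovar i) = (dem_word j [i] :: 'k opol)" by (subst word_eval_single[symmetric]) (rule odem_word_eval)
  then show ?thesis by (simp add: dem_word_Cons)
qed

lemma osj_ovar: "osj j (ovar i) = (simg j i :: 'k::comm_ring_1 opol)"
proof -
  have "osj j (ovar i) = (gen_prod (simg j) [i] :: 'k opol)"
    unfolding osj_def by (subst word_eval_single[symmetric]) (rule osubst_word_eval[OF anticommuting_simg])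
  then show ?thesis by (simp add: omult_oone_right)
qed

lemma odem_omult_ovar:
  assumes "finite_opol P"
  shows "odem j (omult (ovar i) P) = oadd (osmul (dem_coeff j i) P) (omult (simg j i) (odem j P) :: 'k::comm_ring_1 opol)"
  using assms by (simp add: odem_omult odem_ovar osj_ovar omult_osmul_left omult_oone_left)

definition distant :: "nat \<Rightarrow> nat \<Rightarrow> bool" where "distant k i \<longleftrightarrow> i + 2 \<le> k \<or> k + 2 \<le> i"

lemma distant_sym: "distant k i \<Longrightarrow> distant i k" by (auto simp: distant_def)

lemma simg_sign_dem_coeff:
  "distant k i \<Longrightarrow> simg_sign i l * dem_coeff k (adj_swap i l) = - (dem_coeff k l :: 'k::comm_ring_1)"
  by (auto simp: distant_def simg_sign_def dem_coeff_def adj_swap_def)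

lemma simg_adj_swap_comm:
  "distant k i \<Longrightarrow>
     osmul (simg_sign i l) (simg k (adj_swap i l)) = osmul (simg_sign k l) (simg i (adj_swap k l) :: 'k::comm_ring_1 opol)"
  by (auto simp: distant_def simg_sign_def adj_swap_def simg_def fun_eq_iff osmul_def oneg_def)

lemma odem_simg: "distant k i \<Longrightarrow> odem k (simg i l) = osmul (- dem_coeff k l) (oone :: 'k::comm_ring_1 opol)"
  by (simp add: simg_eq odem_osmul odem_ovar osmul_osmul simg_sign_dem_coeff)

lemma osj_osmul: "fin_supp p \<Longrightarrow> osj j (osmul c p) = osmul c (osj j p)"
  by (simp add: osj_def osubst_lin_ext lin_ext_osmul)

lemma osj_simg: "osj k (simg i l) = osmul (simg_sign i l) (simg k (adj_swap i l) :: 'k::comm_ring_1 opol)"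
  by (simp add: simg_eq osj_osmul osj_ovar)

lemma odem_dem_word_Cons:
  assumes "distant k i"
  shows "odem k (dem_word i (l # w)) = oadd (osmul (dem_coeff i l) (dem_word k w))
     (oadd (osmul (- dem_coeff k l) (dem_word i w)) (omult (osj k (simg i l)) (odem k (dem_word i w))) :: 'k::comm_ring_1 opol)"
proof -
  have "odem k (dem_word i (l # w)) = oadd (osmul (dem_coeff i l) (odem k (word_eval w)))
          (odem k (omult (simg i l) (dem_word i w)) :: 'k opol)"
    by (simp add: dem_word_Cons odem_oadd odem_osmul finite_opol_fin_supp)
  also have "\<dots> = oadd (osmul (dem_coeff i l) (dem_word k w))
     (oadd (osmul (- dem_coeff k l) (dem_word i w)) (omult (osj k (simg i l)) (odem k (dem_word i w))))"
    by (simp add: odem_word_eval odem_omult odem_simg[OF assms] omult_osmul_left omult_oone_left)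
  finally show ?thesis .
qed

lemma odem_dem_word_anticomm:
  assumes "distant k i"
  shows "odem k (dem_word i w) = oneg (odem i (dem_word k w) :: 'k::comm_ring_1 opol)"
proof (induction w)
  case Nil then show ?case by (simp only: dem_word.simps(1) odem_ozero) (simp add: fun_eq_iff oneg_apply ozero_apply)
next
  case (Cons l w)
  have S: "osj k (simg i l) = (osj i (simg k l) :: 'k opol)"
    by (simp add: osj_simg simg_adj_swap_comm[OF assms])
  have A: "odem k (dem_word i (l # w)) = oadd (osmul (dem_coeff i l) (dem_word k w))
     (oadd (osmul (- dem_coeff k l) (dem_word i w)) (omult (osj k (simg i l)) (odem k (dem_word i w))) :: 'k opol)"
    by (rule odem_dem_word_Cons[OF assms])
  have B: "odem i (dem_word k (l # w)) = oadd (osmul (dem_coeff k l) (dem_word i w))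
     (oadd (osmul (- dem_coeff i l) (dem_word k w)) (omult (osj i (simg k l)) (odem i (dem_word k w))) :: 'k opol)"
    by (rule odem_dem_word_Cons[OF distant_sym[OF assms]])
  show ?case unfolding A B S Cons omult_oneg_right
    by (simp add: fun_eq_iff oadd_apply osmul_apply oneg_apply algebra_simps)
qed

lemma odem_anticomm:
  assumes "distant k i" "finite_opol p"
  shows "odem k (odem i p) = oneg (odem i (odem k p) :: 'k::comm_ring_1 opol)"
proof (rule opol_linear_eqI[where L="\<lambda>p. odem k (odem i p)" and L'="\<lambda>p. oneg (odem i (odem k p))", OF _ _ _ assms(2)])
  show "opol_linear (\<lambda>p. odem k (odem i p) :: 'k opol)"
    by (rule opol_linear_comp[OF opol_linear_odem opol_linear_odem]) simp
  show "opol_linear (\<lambda>p. oneg (odem i (odem k p)) :: 'k opol)"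
    by (rule opol_linear_comp[OF opol_linear_oneg opol_linear_comp[OF opol_linear_odem opol_linear_odem]]) simp_all
  fix a :: mon assume a: "fin_mon a"
  show "odem k (odem i (mon_poly a)) = (oneg (odem i (odem k (mon_poly a))) :: 'k opol)"
    by (simp add: odem_mon_poly odem_dem_word_anticomm[OF assms(1)])
qed

lemma opol_linear_osigma: "opol_linear (osigma i)" by (simp add: osigma_def opol_linear_osubst)
lemma finite_opol_osigma[simp]: "finite_opol (osigma i p :: 'k::comm_ring_1 opol)" by (simp add: osigma_def)
lemma fin_supp_osigma[simp]: "fin_supp (osigma i p :: 'k::comm_ring_1 opol)" by (simp add: finite_opol_fin_supp)
lemma osigma_oadd: "fin_supp p \<Longrightarrow> fin_supp q \<Longrightarrow> osigma i (oadd p q) = oadd (osigma i p) (osigma i q)"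
  by (simp add: osigma_def osubst_lin_ext lin_ext_oadd)
lemma osigma_osmul: "fin_supp p \<Longrightarrow> osigma i (osmul c p) = osmul c (osigma i p)"
  by (simp add: osigma_def osubst_lin_ext lin_ext_osmul)

lemma osigma_ozero[simp]: "osigma i ozero = ozero"
  by (simp add: osigma_def osubst_lin_ext)

lemma osigma_0: "finite_opol p \<Longrightarrow> osigma 0 p = (p :: 'k::comm_ring_1 opol)"
  by (simp add: osigma_def osubst_ovar)

lemma osigma_omult_ovar:
  "finite_opol P \<Longrightarrow> osigma i (omult (ovar l) P) = omult (ovar (l + i)) (osigma i (P :: 'k::comm_ring_1 opol))"
  unfolding osigma_def by (rule osubst_omult_ovar[OF anticommuting_shift])

lemma osigma_dem_word: "osigma i (dem_word j w) = (dem_word (j + i) (map (\<lambda>l. l + i) w) :: 'k::comm_ring_1 opol)"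
proof (induction w)
  case Nil then show ?case by (simp add: osigma_def osubst_lin_ext)
next
  case (Cons l w)
  have d: "dem_coeff (j + i) (l + i) = (dem_coeff j l :: 'k)" by (simp add: dem_coeff_def)
  have g: "simg_sign (j + i) (l + i) = (simg_sign j l :: 'k)" by (simp add: simg_sign_def)
  have s: "adj_swap (j + i) (l + i) = adj_swap j l + i" by (simp add: adj_swap_def)
  have "osigma i (dem_word j (l # w)) = oadd (osmul (dem_coeff j l) (osigma i (word_eval w)))
     (osmul (simg_sign j l) (omult (ovar (adj_swap j l + i)) (osigma i (dem_word j w) :: 'k opol)))"
    by (simp add: dem_word_Cons osigma_oadd osigma_osmul finite_opol_fin_supp simg_eq omult_osmul_left osigma_omult_ovar)
  also have "\<dots> = dem_word (j + i) (map (\<lambda>l. l + i) (l # w))"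
    by (simp add: dem_word_Cons Cons osigma_word_eval d g s simg_eq omult_osmul_left)
  finally show ?case .
qed

lemma odem_osigma:
  assumes "finite_opol p"
  shows "odem (j + i) (osigma i p) = osigma i (odem j p :: 'k::comm_ring_1 opol)"
proof (rule opol_linear_eqI[where L="\<lambda>p. odem (j + i) (osigma i p)" and L'="\<lambda>p. osigma i (odem j p)", OF _ _ _ assms])
  show "opol_linear (\<lambda>p. odem (j + i) (osigma i p) :: 'k opol)"
    by (rule opol_linear_comp[OF opol_linear_odem opol_linear_osigma]) simp
  show "opol_linear (\<lambda>p. osigma i (odem j p) :: 'k opol)"
    by (rule opol_linear_comp[OF opol_linear_osigma opol_linear_odem]) simp
  fix a :: mon assume a: "fin_mon a"
  have "osigma i (mon_poly a) = (word_eval (map (\<lambda>l. l + i) (mono_word a)) :: 'k opol)"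
    by (simp add: word_eval_mono_word[OF a, symmetric] osigma_word_eval)
  then show "odem (j + i) (osigma i (mon_poly a)) = (osigma i (odem j (mon_poly a)) :: 'k opol)"
    by (simp add: odem_word_eval odem_mon_poly osigma_dem_word)
qed

definition vars_below :: "nat \<Rightarrow> 'k::zero opol \<Rightarrow> bool" where
  "vars_below j p \<longleftrightarrow> (\<forall>a. p a \<noteq> 0 \<longrightarrow> (\<forall>i. a i \<noteq> 0 \<longrightarrow> i < j))"

lemma set_mono_word: "x \<in> set (mono_word a) \<Longrightarrow> a x \<noteq> 0"
  unfolding mono_word_def
  by (cases "finite {i. a i \<noteq> 0}") auto

lemma dem_word_vars_below: "(\<And>x. x \<in> set w \<Longrightarrow> x < j) \<Longrightarrow> dem_word j w = (ozero :: 'k::comm_ring_1 opol)"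
proof (induction w)
  case Nil then show ?case by simp
next
  case (Cons l w)
  have "l < j" using Cons.prems by simp
  then have "dem_coeff j l = (0::'k)" by (simp add: dem_coeff_def)
  moreover have "dem_word j w = (ozero :: 'k opol)" using Cons by simp
  ultimately show ?case by (simp add: dem_word_Cons) (simp add: fun_eq_iff oadd_apply osmul_apply ozero_apply)
qed

lemma odem_vars_below:
  assumes "vars_below j p"
  shows "odem j p = (ozero :: 'k::comm_ring_1 opol)"
proof -
  have "\<And>a. p a \<noteq> 0 \<Longrightarrow> dem_word j (mono_word a) = (ozero :: 'k opol)"
    using assms unfolding vars_below_def by (auto intro!: dem_word_vars_below dest: set_mono_word)
  then show ?thesis
    by (simp add: odem_def osum_def osmul_def ozero_def fun_eq_iff)
qed

lemma word_exp_pos_in_set: "0 < word_exp w i \<Longrightarrow> i \<in> set w"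
  unfolding word_exp_def using count_list_0_iff[of w i] by (metis less_irrefl)
lemma vars_below_word_eval: "(\<And>x. x \<in> set w \<Longrightarrow> x < j) \<Longrightarrow> vars_below j (word_eval w :: 'k::comm_ring_1 opol)"
  unfolding vars_below_def word_eval_signed_mon by (auto simp: osmul_def mon_poly_def dest!: word_exp_pos_in_set)

lemma vars_below_osum: "(\<And>i. i \<in> I \<Longrightarrow> vars_below j (F i)) \<Longrightarrow> vars_below j (osum F I :: 'k::comm_ring_1 opol)"
  unfolding vars_below_def by (auto elim!: osum_nonzeroE)

section \<open>Complete and elementary symmetric polynomials\<close>

definition hsym_lists :: "nat \<Rightarrow> nat \<Rightarrow> nat list set" where
  "hsym_lists N r = {l. length l = r \<and> sorted l \<and> set l \<subseteq> {1..N}}"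

lemma hsym_eq_osum: "hsym N r = osum (\<lambda>l. word_eval (rev l)) (hsym_lists N r)"
  by (simp add: hsym_def hsym_lists_def)

lemma finite_hsym_lists: "finite (hsym_lists N r)"
  unfolding hsym_lists_def
  by (rule finite_subset[OF _ finite_lists_length_eq[OF finite_atLeastAtMost, of 1 N r]]) auto

lemma finite_opol_hsym[simp]: "finite_opol (hsym N r :: 'k::comm_ring_1 opol)"
  by (simp add: hsym_eq_osum finite_hsym_lists)

lemma hsym_0: "hsym N 0 = (oone :: 'k::comm_ring_1 opol)"
proof -
  have "hsym_lists N 0 = {[]}" by (auto simp: hsym_lists_def)
  then show ?thesis by (simp add: hsym_eq_osum osum_singleton)
qed

lemma hsym_zero_N: "hsym 0 (Suc r) = (ozero :: 'k::comm_ring_1 opol)"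
proof -
  have "hsym_lists 0 (Suc r) = {}" by (auto simp: hsym_lists_def)
  then show ?thesis by (simp add: hsym_eq_osum osum_empty)
qed

lemma hsym_lists_Suc:
  "hsym_lists (Suc N) (Suc r) = (\<lambda>l. l @ [Suc N]) ` hsym_lists (Suc N) r \<union> hsym_lists N (Suc r)"
proof (intro equalityI subsetI)
  fix l assume l: "l \<in> hsym_lists (Suc N) (Suc r)"
  then obtain l' x where l_eq: "l = l' @ [x]"
    unfolding hsym_lists_def by (auto simp: length_Suc_conv_rev)
  have l': "l' \<in> hsym_lists (Suc N) r" and x: "x \<le> Suc N" and below: "\<forall>z\<in>set l'. z \<le> x"
    using l unfolding l_eq hsym_lists_def by (auto simp: sorted_append)
  show "l \<in> (\<lambda>l. l @ [Suc N]) ` hsym_lists (Suc N) r \<union> hsym_lists N (Suc r)"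
  proof (cases "x = Suc N")
    case True then show ?thesis using l' l_eq by blast
  next
    case False
    then have "set l \<subseteq> {..N}" using x below unfolding l_eq by auto
    then have "l \<in> hsym_lists N (Suc r)" using l unfolding hsym_lists_def by (auto simp: subset_iff)
    then show ?thesis by simp
  qed
qed (fastforce simp: hsym_lists_def sorted_append)

lemma hsym_Suc:
  "hsym (Suc N) (Suc r) = oadd (omult (ovar (Suc N)) (hsym (Suc N) r)) (hsym N (Suc r) :: 'k::comm_ring_1 opol)"
proof -
  have inj: "inj_on (\<lambda>l. l @ [Suc N]) (hsym_lists (Suc N) r)" by (rule inj_onI) simp
  have disj: "(\<lambda>l. l @ [Suc N]) ` hsym_lists (Suc N) r \<inter> hsym_lists N (Suc r) = {}"
    by (auto simp: hsym_lists_def)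
  have "hsym (Suc N) (Suc r) = oadd (osum (\<lambda>l. word_eval (rev (l @ [Suc N]))) (hsym_lists (Suc N) r))
      (hsym N (Suc r) :: 'k opol)"
    unfolding hsym_eq_osum[of "Suc N" "Suc r"] hsym_lists_Suc
    by (subst osum_union) (simp_all add: finite_hsym_lists disj osum_image[OF inj] hsym_eq_osum)
  also have "osum (\<lambda>l. word_eval (rev (l @ [Suc N]))) (hsym_lists (Suc N) r) = omult (ovar (Suc N)) (hsym (Suc N) r :: 'k opol)"
    by (simp add: hsym_eq_osum omult_osum_right)
  finally show ?thesis .
qed

lemma vars_below_hsym: "vars_below (Suc N) (hsym N r :: 'k::comm_ring_1 opol)"
  unfolding hsym_eq_osum
  by (rule vars_below_osum, rule vars_below_word_eval) (auto simp: hsym_lists_def)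

lemma odem_oone[simp]: "odem j oone = (ozero :: 'k::comm_ring_1 opol)"
  using odem_word_eval[of j "[]", where 'k='k] by simp

lemma simg_self: "simg j j = ovar (Suc j)" by (simp add: simg_def)

lemma odem_hsym: "odem (Suc M) (hsym (Suc M) (Suc r)) = (hsym (Suc (Suc M)) r :: 'k::comm_ring_1 opol)"
proof (induction r)
  case 0
  have "odem (Suc M) (hsym (Suc M) (Suc 0)) = oadd (odem (Suc M) (omult (ovar (Suc M)) (hsym (Suc M) 0)))
      (odem (Suc M) (hsym M (Suc 0)) :: 'k opol)"
    by (simp add: hsym_Suc odem_oadd finite_opol_fin_supp)
  also have "\<dots> = oone" by (simp add: odem_vars_below[OF vars_below_hsym] odem_omult_ovar hsym_0 dem_coeff_def)
  finally show ?case by (simp add: hsym_0)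
next
  case (Suc r)
  have "odem (Suc M) (hsym (Suc M) (Suc (Suc r))) = oadd (odem (Suc M) (omult (ovar (Suc M)) (hsym (Suc M) (Suc r))))
      (odem (Suc M) (hsym M (Suc (Suc r))) :: 'k opol)"
    by (simp add: hsym_Suc[of M "Suc r", where 'k='k] odem_oadd finite_opol_fin_supp)
  also have "\<dots> = oadd (hsym (Suc M) (Suc r)) (omult (ovar (Suc (Suc M))) (hsym (Suc (Suc M)) r))"
    by (simp add: odem_vars_below[OF vars_below_hsym] odem_omult_ovar Suc dem_coeff_def simg_self)
  also have "\<dots> = hsym (Suc (Suc M)) (Suc r)"
    by (simp add: hsym_Suc[of "Suc M" r, where 'k='k] oadd_commute)
  finally show ?case .
qed

lemma hsym_one_word_eval: "hsym (Suc 0) r = (word_eval (replicate r (Suc 0)) :: 'k::comm_ring_1 opol)"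
proof (induction r)
  case 0 then show ?case by (simp add: hsym_0)
next
  case (Suc r)
  have "hsym (Suc 0) (Suc r) = oadd (omult (ovar (Suc 0)) (hsym (Suc 0) r)) (hsym 0 (Suc r) :: 'k opol)"
    by (rule hsym_Suc)
  then show ?case using Suc by (simp add: hsym_zero_N)
qed

lemma opow_ovar_one_word_eval: "opow (ovar (Suc 0)) r = (word_eval (replicate r (Suc 0)) :: 'k::comm_ring_1 opol)"
  by (induction r) (simp_all add: opow_def)

definition esym_sets :: "nat \<Rightarrow> nat \<Rightarrow> nat set set" where
  "esym_sets N r = {S. S \<subseteq> {1..N} \<and> card S = r}"

lemma esym_eq_osum: "esym N r = osum (\<lambda>S. word_eval (sorted_list_of_set S)) (esym_sets N r)"
  by (simp add: esym_def esym_sets_def)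

lemma finite_esym_sets: "finite (esym_sets N r)"
  unfolding esym_sets_def by (rule finite_subset[of _ "Pow {1..N}"]) auto

lemma finite_opol_esym[simp]: "finite_opol (esym N r :: 'k::comm_ring_1 opol)"
  by (simp add: esym_eq_osum finite_esym_sets)
lemma fin_supp_esym[simp]: "fin_supp (esym N r :: 'k::comm_ring_1 opol)"
  by (simp add: finite_opol_fin_supp)

lemma esym_0: "esym N 0 = (oone :: 'k::comm_ring_1 opol)"
proof -
  have "esym_sets N 0 = {{}}"
  proof (intro equalityI subsetI)
    fix S assume "S \<in> esym_sets N 0"
    then have "S \<subseteq> {1..N}" "card S = 0" by (auto simp: esym_sets_def)
    moreover then have "finite S" using finite_subset by blast
    ultimately show "S \<in> {{}}" by simp
  qed (simp add: esym_sets_def)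
  then show ?thesis by (simp add: esym_eq_osum osum_singleton)
qed

lemma esym_sets_Suc: "esym_sets (Suc N) (Suc r) = esym_sets N (Suc r) \<union> insert (Suc N) ` esym_sets N r"
proof (intro equalityI subsetI)
  fix S assume S: "S \<in> esym_sets (Suc N) (Suc r)"
  then have sub: "S \<subseteq> {1..Suc N}" and c: "card S = Suc r" by (auto simp: esym_sets_def)
  have fin: "finite S" using sub finite_subset by blast
  show "S \<in> esym_sets N (Suc r) \<union> insert (Suc N) ` esym_sets N r"
  proof (cases "Suc N \<in> S")
    case True
    have "S - {Suc N} \<subseteq> {1..N}" using sub by auto
    moreover have "card (S - {Suc N}) = r" using c True fin by simp
    ultimately have "S - {Suc N} \<in> esym_sets N r" by (simp add: esym_sets_def)
    moreover have "S = insert (Suc N) (S - {Suc N})" using True by auto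
    ultimately show ?thesis by blast
  next
    case False
    then have "S \<subseteq> {1..N}" using sub by (auto simp: le_Suc_eq)
    then show ?thesis using c by (simp add: esym_sets_def)
  qed
next
  fix S assume "S \<in> esym_sets N (Suc r) \<union> insert (Suc N) ` esym_sets N r"
  then show "S \<in> esym_sets (Suc N) (Suc r)"
  proof
    assume "S \<in> esym_sets N (Suc r)" then show ?thesis by (auto simp: esym_sets_def)
  next
    assume "S \<in> insert (Suc N) ` esym_sets N r"
    then obtain T where T: "T \<in> esym_sets N r" "S = insert (Suc N) T" by blast
    have fin: "finite T" using T(1) finite_subset[of T "{1..N}"] by (auto simp: esym_sets_def)
    have "Suc N \<notin> T" using T(1) by (auto simp: esym_sets_def)
    then show ?thesis using T fin by (auto simp: esym_sets_def)
  qed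
qed

lemma sorted_insert_max:
  assumes "S \<subseteq> {1..N}"
  shows "sorted_list_of_set (insert (Suc N) S) = sorted_list_of_set S @ [Suc N]"
proof -
  have fin: "finite S" using assms finite_subset by blast
  have nin: "Suc N \<notin> S" using assms by auto
  have H: "sorted_wrt (<) (sorted_list_of_set S @ [Suc N]) \<and> set (sorted_list_of_set S @ [Suc N]) = insert (Suc N) S
        \<and> length (sorted_list_of_set S @ [Suc N]) = card (insert (Suc N) S)"
    using fin nin assms by (auto simp: sorted_wrt_append)
  have fi: "finite (insert (Suc N) S)" using fin by simp
  show ?thesis using sorted_list_of_set_unique[OF fi, of "sorted_list_of_set S @ [Suc N]"] H by blast
qed

lemma esym_Suc:
  "esym (Suc N) (Suc r) = oadd (esym N (Suc r)) (omult (esym N r) (ovar (Suc N)) :: 'k::comm_ring_1 opol)"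
proof -
  have inj: "inj_on (insert (Suc N)) (esym_sets N r)"
  proof (rule inj_onI)
    fix S T assume "S \<in> esym_sets N r" "T \<in> esym_sets N r" "insert (Suc N) S = insert (Suc N) T"
    moreover then have "Suc N \<notin> S" "Suc N \<notin> T" by (auto simp: esym_sets_def)
    ultimately show "S = T" by (metis Diff_insert_absorb)
  qed
  have disj: "esym_sets N (Suc r) \<inter> insert (Suc N) ` esym_sets N r = {}" by (auto simp: esym_sets_def)
  have "esym (Suc N) (Suc r) = oadd (esym N (Suc r))
      (osum (\<lambda>S. word_eval (sorted_list_of_set (insert (Suc N) S))) (esym_sets N r) :: 'k opol)"
    unfolding esym_eq_osum[of "Suc N" "Suc r"] esym_sets_Suc
    by (subst osum_union) (simp_all add: finite_esym_sets disj osum_image[OF inj] esym_eq_osum)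
  also have "osum (\<lambda>S. word_eval (sorted_list_of_set (insert (Suc N) S))) (esym_sets N r)
      = osum (\<lambda>S. omult (word_eval (sorted_list_of_set S)) (ovar (Suc N))) (esym_sets N r :: nat set set)"
    unfolding osum_def
    by (intro ext sum.cong refl) (simp add: esym_sets_def sorted_insert_max word_eval_append omult_oone_right)
  also have "\<dots> = omult (esym N r) (ovar (Suc N) :: 'k opol)"
    by (simp add: esym_eq_osum omult_osum_left)
  finally show ?thesis .
qed

lemma vars_below_esym: "vars_below (Suc N) (esym N r :: 'k::comm_ring_1 opol)"
  unfolding esym_eq_osum
proof (rule vars_below_osum, rule vars_below_word_eval)
  fix S x assume "S \<in> esym_sets N r" "x \<in> set (sorted_list_of_set S)"
  moreover then have "finite S" using finite_subset[of S "{1..N}"] by (auto simp: esym_sets_def)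
  ultimately show "x < Suc N" by (auto simp: esym_sets_def)
qed

lemma odem_omult_killed:
  assumes "odem j A = ozero" "finite_opol A" "finite_opol P"
  shows "odem j (omult A P) = omult (osj j A) (odem j P :: 'k::comm_ring_1 opol)"
  using assms by (simp add: odem_omult)

lemma odem_omult_ovar_killed:
  assumes "odem j A = ozero" "finite_opol A"
  shows "odem j (omult A (ovar i)) = osmul (dem_coeff j i) (osj j A :: 'k::comm_ring_1 opol)"
  using assms by (simp add: odem_omult_killed odem_ovar omult_osmul_right omult_oone_right)

lemma odem_omult_adjacent_killed:
  assumes "odem j C = ozero" "finite_opol C"
  shows "odem j (omult (omult C (ovar j)) (ovar (Suc j))) = (ozero :: 'k::comm_ring_1 opol)"
proof -
  have "odem j (omult (ovar j) (ovar (Suc j))) = (ozero :: 'k opol)"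
    by (simp add: odem_omult_ovar dem_coeff_def simg_self odem_ovar omult_osmul_right omult_oone_right)
       (simp add: fun_eq_iff oadd_apply osmul_apply ozero_apply)
  then show ?thesis using assms by (simp add: omult_assoc odem_omult_killed)
qed

text \<open>Expanding twice along the last two variables,
  \<open>e^(M+2)_(s+2) = e^M_(s+2) + e^M_(s+1) x_(M+1) + (e^M_(s+1) + e^M_s x_(M+1)) x_(M+2)\<close>,
  where \<open>\<partial>_(M+1)\<close> kills each \<open>e^M\<close>; the two middle terms then contribute
  \<open>\<plusminus>s_(M+1)(e^M_(s+1))\<close>.\<close>
lemma odem_esym_top: "odem (Suc M) (esym (Suc (Suc M)) r) = (ozero :: 'k::comm_ring_1 opol)"
proof -
  let ?J = "Suc M"
  have kill: "\<And>s. odem ?J (esym M s) = (ozero :: 'k opol)"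
    by (rule odem_vars_below[OF vars_below_esym])
  have dc: "dem_coeff ?J ?J = (1::'k)" "dem_coeff ?J (Suc ?J) = (-1::'k)"
    by (simp_all add: dem_coeff_def)
  consider "r = 0" | "r = Suc 0" | s where "r = Suc (Suc s)"
    by (metis not0_implies_Suc)
  then show ?thesis
  proof cases
    case 1 then show ?thesis by (simp add: esym_0)
  next
    case 2
    have "(esym (Suc ?J) r :: 'k opol) = oadd (oadd (esym M (Suc 0)) (omult oone (ovar ?J))) (omult oone (ovar (Suc ?J)))"
      unfolding 2 esym_Suc[of ?J] esym_Suc[of M 0] esym_0 ..
    then show ?thesis
      by (simp add: odem_oadd omult_oone_left odem_ovar dc kill)
         (simp add: fun_eq_iff oadd_apply osmul_apply ozero_apply)
  next
    case 3
    have "(esym (Suc ?J) r :: 'k opol) = oadd (oadd (esym M (Suc (Suc s))) (omult (esym M (Suc s)) (ovar ?J)))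
        (omult (oadd (esym M (Suc s)) (omult (esym M s) (ovar ?J))) (ovar (Suc ?J)))"
      unfolding 3 esym_Suc[of ?J] esym_Suc[of M] ..
    then show ?thesis
      by (simp add: odem_oadd omult_oadd_left kill odem_omult_ovar_killed dc odem_omult_adjacent_killed)
         (simp add: fun_eq_iff oadd_apply osmul_apply ozero_apply)
  qed
qed

lemma odem_esym: "1 \<le> j \<Longrightarrow> j < N \<Longrightarrow> odem j (esym N r) = (ozero :: 'k::comm_ring_1 opol)"
proof (induction N arbitrary: r)
  case (Suc M)
  show ?case
  proof (cases "j < M")
    case True
    show ?thesis
    proof (cases r)
      case (Suc s)
      have "dem_coeff j (Suc M) = (0::'k)" using True by (simp add: dem_coeff_def)
      then show ?thesis using True Suc.IH[OF Suc.prems(1)]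
        by (simp add: \<open>r = Suc s\<close> esym_Suc odem_oadd odem_omult_ovar_killed)
           (simp add: osmul_def ozero_def)
    qed (simp add: esym_0)
  next
    case False
    then have j: "j = M" using Suc.prems by simp
    then obtain M' where "M = Suc M'" using Suc.prems by (cases M) auto
    then show ?thesis using j by (simp add: odem_esym_top)
  qed
qed simp

lemma finite_opol_osym: "p \<in> osym N \<Longrightarrow> finite_opol (p :: 'k::comm_ring_1 opol)"
  by (induction rule: osym.induct) simp_all

lemma odem_osym: "p \<in> osym N \<Longrightarrow> 1 \<le> j \<Longrightarrow> j < N \<Longrightarrow> odem j p = (ozero :: 'k::comm_ring_1 opol)"
proof (induction rule: osym.induct)
  case (gen r) then show ?case by (rule odem_esym)
next
  case one then show ?case by simp
next
  case (add p q) then show ?case by (simp add: odem_oadd finite_opol_fin_supp finite_opol_osym)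
next
  case (smul p c) then show ?case
    by (simp add: odem_osmul finite_opol_fin_supp finite_opol_osym) (simp add: osmul_def ozero_def)
next
  case (mult p q) then show ?case by (simp add: odem_omult finite_opol_osym)
qed

lemma finite_opol_odem_seq[simp]: "finite_opol g \<Longrightarrow> finite_opol (odem_seq i g :: 'k::comm_ring_1 opol)"
  by (induction i) simp_all

lemma odem_odem_seq_distant:
  assumes "finite_opol g" "odem K g = ozero" "i + 2 \<le> K"
  shows "odem K (odem_seq i g) = (ozero :: 'k::comm_ring_1 opol)"
  using assms(3)
proof (induction i)
  case (Suc i)
  then have "distant K (Suc i)" by (simp add: distant_def)
  then show ?case using Suc assms(1) by (simp add: odem_anticomm)
qed (simp add: assms(2))

lemma odem_osigma_hsym:
  assumes "i < K"
  shows "odem K (osigma i (hsym (K - i) (Suc r))) = osigma i (hsym (Suc K - i) r :: 'k::comm_ring_1 opol)"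
proof -
  obtain M where M: "K - i = Suc M" using assms by (cases "K - i") auto
  have "odem (Suc M + i) (osigma i (hsym (Suc M) (Suc r))) = osigma i (hsym (Suc (Suc M)) r :: 'k opol)"
    by (simp only: odem_osigma[OF finite_opol_hsym] odem_hsym)
  moreover have "K = Suc M + i" "Suc K - i = Suc (Suc M)" using M assms by auto
  ultimately show ?thesis using M by simp
qed

lemma osj_osigma_hsym_one: "osj (Suc J) (osigma J (hsym (Suc 0) r)) = osigma (Suc J) (hsym (Suc 0) r :: 'k::comm_ring_1 opol)"
proof -
  have "gen_prod (simg (Suc J)) (replicate r (Suc J)) = (word_eval (replicate r (Suc (Suc J))) :: 'k opol)"
    by (induction r) (simp_all add: simg_self)
  then show ?thesis
    by (simp add: hsym_one_word_eval osigma_word_eval osj_def osubst_word_eval[OF anticommuting_simg])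
qed

text \<open>Being killed by \<open>\<partial>_2, \<dots>, \<partial>_k\<close> is all that is used of \<open>\<sigma>_1(f)\<close>.  In the induction
  step, the Leibniz terms in which \<open>\<partial>_(k+1)\<close> misses the complete symmetric polynomial
  vanish for \<open>i < k\<close> and form the new summand for \<open>i = k\<close>.\<close>
lemma odem_seq_opow_omult:
  fixes g :: "'k::comm_ring_1 opol"
  assumes g: "finite_opol g" and killed: "\<And>K. 2 \<le> K \<Longrightarrow> K \<le> k \<Longrightarrow> odem K g = ozero"
  shows "odem_seq k (omult (opow (ovar 1) (m + k)) g) =
    osum (\<lambda>i. omult (osigma i (hsym (Suc k - i) (m + i))) (odem_seq i g)) {0..<Suc k}"
  using killed
proof (induction k arbitrary: m)
  case 0
  show ?case using g by (simp add: osum_singleton opow_ovar_one_word_eval hsym_one_word_eval osigma_0)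
next
  case (Suc k)
  let ?K = "Suc k" and ?D = "\<lambda>i. odem_seq i g"
  define G where "G i = omult (osigma i (hsym (Suc ?K - i) (m + i))) (?D i)" for i
  define T where "T i = omult (osj ?K (osigma i (hsym (?K - i) (Suc m + i)))) (odem ?K (?D i))" for i
  have IH: "odem_seq k (omult (opow (ovar 1) (Suc m + k)) g) =
      osum (\<lambda>i. omult (osigma i (hsym (?K - i) (Suc m + i))) (?D i)) {0..<?K}"
    using Suc.IH[of "Suc m"] Suc.prems by simp
  have leibniz: "odem ?K (omult (osigma i (hsym (?K - i) (Suc m + i))) (?D i)) = oadd (G i) (T i)"
    if "i < ?K" for i
    using that g by (simp add: odem_omult odem_osigma_hsym G_def T_def)
  have T_vanish: "T i = ozero" if "i < k" for i
    using that g Suc.prems by (simp add: T_def odem_odem_seq_distant)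
  have T_last: "T k = G ?K"
    by (simp add: T_def G_def osj_osigma_hsym_one)
  have "odem_seq ?K (omult (opow (ovar 1) (m + ?K)) g)
      = odem ?K (odem_seq k (omult (opow (ovar 1) (Suc m + k)) g))"
    by simp
  also have "\<dots> = osum (\<lambda>i. odem ?K (omult (osigma i (hsym (?K - i) (Suc m + i))) (?D i))) {0..<?K}"
    unfolding IH using g by (intro odem_osum) (simp_all add: finite_opol_fin_supp)
  also have "\<dots> = osum (\<lambda>i. oadd (G i) (T i)) {0..<?K}"
    by (rule osum_cong) (rule leibniz, simp)
  also have "\<dots> = osum G {0..<Suc ?K}"
    by (simp add: osum_oadd T_vanish T_last osum_apply oadd_apply atLeast0LessThan fun_eq_iff ozero_apply)
  finally show ?case by (simp add: G_def[abs_def])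
qed

theorem mainTheorem13:
  fixes n m k :: nat and f :: "'k::field opol"
  assumes char: "(2::'k) \<noteq> 0"
    and n: "1 \<le> n"
    and f: "f \<in> osym (n - 1)"
    and k: "1 \<le> k" "k \<le> n"
  shows "odem_seq (k - 1) (omult (opow (ovar 1) (m + k - 1)) (osigma 1 f)) =
         osum (\<lambda>i. omult (osigma i (hsym (k - i) (m + i))) (odem_seq i (osigma 1 f))) {0..<k}"
proof -
  obtain k' where k': "k = Suc k'" using k by (cases k) auto
  have "odem K (osigma 1 f) = ozero" if K: "2 \<le> K" "K \<le> k'" for K
  proof -
    obtain J where J: "K = J + 1" using K by (cases K) auto
    have "odem J f = ozero" using f J K k k' by (intro odem_osym) auto
    then show ?thesis using odem_osigma[of f J 1] f J by (simp add: finite_opol_osym)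
  qed
  then show ?thesis
    using odem_seq_opow_omult[of "osigma 1 f" k' m] k' by simp
qed

end
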